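(* Let $\{X_s,\|\cdot\|_s\}_{s\in\mathbb N_0}$ be a sequence of Banach spaces satisfying (F1)–(F3), $\{\Theta_s,|||\cdot|||_s\}_{s\in\mathbb N_0}$ a sequence of $\lambda_s$–$BK$-spaces satisfying (F1)–(F3), and let $\{g_i\}_{i=1}^\infty\in(X_F^* )^{\mathbb N}$ be an $F$-frame for $X_F$ with respect to $\Theta_F$. Then: (a) for every $s\in\mathbb N_0$, $\{g_i^s\}_{i=1}^\infty$ is a Banach frame for $X_s$ with respect to $\Theta_s$; (b) if all $\Theta_s$ are $CB$-spaces, there exists $\{f_i\}_{i=1}^\infty\in (X_F)^{\mathbb N}$ which is a $DF$-Bessel sequence for $X_F^*$ with respect to $\Theta_F^*$ such that $f=\sum_{i=1}^\infty g_i(f)f_i$ for all $f\in X_F$ (convergence in $X_F$), $g=\sum_{i=1}^\infty g(f_i)g_i$ for all $g\in X_F^*$ (convergence in $X_F^*$), and $f=\sum_{i=1}^\infty g_i^s(f)f_i$ for all $f\in X_s$, $s\in\mathbb N_0$ (convergence in $X_s$); (c) if all $\Theta_s$ and $\Theta_s^*$ are $CB$-spaces, there exists $\{f_i\}\in(X_F)^{\mathbb N}$ which is a pre-$DF$-frame for $X_F^*$ with respect to $\Theta_F^*$ satisfying the three expansions in (b) and moreover $g=\sum_{i=1}^\infty g(f_i)g_i^s$ for all $g\in X_s^*$, $s\in\mathbb N_0$; (d) if all $\Theta_s$ are reflexive $CB$-spaces, there exists $\{f_i\}\in(X_F)^{\mathbb N}$ which is a $DF$-frame for $X_F^*$ with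 respect to $\Theta_F^*$ satisfying all four expansions in (b) and (c).
   Context: Conditions (F1)–(F3) for a sequence $\{Y_s,|\cdot|_s\}_{s\in\mathbb N_0}$ of separable Banach spaces: (F1) $\{0\}\neq\bigcap_sY_s\subseteq\dots\subseteq Y_1\subseteq Y_0$; (F2) $|\cdot|_0\le|\cdot|_1\le\dots$; (F3) $Y_F:=\bigcap_sY_s$ dense in each $Y_s$. $X_F=\bigcap_sX_s$, $\Theta_F=\bigcap_s\Theta_s$. $BK$-space: Banach sequence space with continuous coordinate functionals; $\lambda$–$BK$-space: $BK$-space containing the canonical vectors $e_i$ with $|||\sum_{i=1}^nc_ie_i|||\le\lambda|||\{c_i\}|||$; $CB$-space: $BK$-space in which the canonical vectors form a Schauder basis. For a $CB$-space $\Theta$, $\Theta^*$ is identified with the $BK$-space $\{\{g(e_i)\}_{i=1}^\infty:g\in\Theta^*\}$ normed by $|||\{g(e_i)\}|||:=\|g\|_{\Theta^*}$. For a Banach space $X$ and $BK$-space $\Theta$: $\{g_i\}\subset X^*$ is a $\Theta$-Bessel sequence if $\{g_i(f)\}\in\Theta$ and $|||\{g_i(f)\}|||\le B\|f\|$ for all $f\in X$; a $\Theta$-frame if moreover $A\|f\|\le|||\{g_i(f)\}|||$ with $A>0$; a Banach frame w.r.t. $\Theta$ if it is a $\Theta$-frame and there is a bounded operator $V:\Theta\to X$ with $V(\{g_i(f)\})=f$, $f\in X$. (For $\{f_i\}\subset X\subseteq X^{**}$ these notions are applied to $X^*$ via $g\mapsto\{g(f_i)\}$.) Pre-$F$-frame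 / $F$-Bessel / $F$-frame: $\{g_i\}\in(X_F^* )^{\mathbb N}$ with $\{g_i(f)\}\in\Theta_F$ for $f\in X_F$ and for each $s$ constants $0<A_s\le B_s$ with $A_s\|f\|_s\le|||\{g_i(f)\}|||_s\le B_s\|f\|_s$ (pre-$F$-frame; only the upper inequality: $F$-Bessel); an $F$-frame is a pre-$F$-frame with an $F$-bounded $V:\Theta_F\to X_F$, $V(\{g_i(f)\})=f$ for $f\in X_F$, where $F$-bounded means $\|Vc\|_s\le K_s|||c|||_s$ for each $s$. For an $F$-Bessel sequence, $g_i^s\in X_s^*$ denotes the unique continuous extension of $g_i$ from $X_F$ to $X_s$. When all $\Theta_s$ are $CB$-spaces, $\{f_i\}\in(X_F)^{\mathbb N}$ is a $DF$-Bessel sequence (resp. pre-$DF$-frame, resp. $DF$-frame) for $X_F^*$ w.r.t. $\Theta_F^*$ if for every $s$ it is a $\Theta_s^*$-Bessel sequence (resp. $\Theta_s^*$-frame, resp. Banach frame w.r.t. $\Theta_s^*$) for $X_s^*$. *)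

theory Defs
  imports "HOL-Analysis.Analysis" "HOL-Library.Function_Algebras"
begin

instantiation "fun" :: (type, real_vector) real_vector
begin
definition scaleR_fun :: "real \<Rightarrow> ('a \<Rightarrow> 'b) \<Rightarrow> 'a \<Rightarrow> 'b" where
  "scaleR_fun r f = (\<lambda>x. r *\<^sub>R f x)"
instance by standard (auto simp: scaleR_fun_def fun_eq_iff scaleR_add_right scaleR_add_left)
end

(* Normed / Banach spaces realised as subspaces X of an ambient real vector space,
   carrying their own norm N. *)

definition is_norm_on :: "'a::real_vector set \<Rightarrow> ('a \<Rightarrow> real) \<Rightarrow> bool" where
  "is_norm_on X N \<longleftrightarrow> 0 \<in> X \<and> (\<forall>x\<in>X. \<forall>y\<in>X. x + y \<in> X) \<and> (\<forall>x\<in>X. \<forall>c. c *\<^sub>R x \<in> X)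
     \<and> (\<forall>x\<in>X. 0 \<le> N x) \<and> (\<forall>x\<in>X. N x = 0 \<longleftrightarrow> x = 0)
     \<and> (\<forall>x\<in>X. \<forall>c. N (c *\<^sub>R x) = \<bar>c\<bar> * N x)
     \<and> (\<forall>x\<in>X. \<forall>y\<in>X. N (x + y) \<le> N x + N y)"

definition banach_on :: "'a::real_vector set \<Rightarrow> ('a \<Rightarrow> real) \<Rightarrow> bool" where
  "banach_on X N \<longleftrightarrow> is_norm_on X N \<and>
     (\<forall>u. (\<forall>n. u n \<in> X) \<and> (\<forall>e>0. \<exists>M. \<forall>m\<ge>M. \<forall>n\<ge>M. N (u m - u n) < e)
          \<longrightarrow> (\<exists>x\<in>X. (\<lambda>n. N (u n - x)) \<longlonglongrightarrow> 0))"

definition dense_in :: "'a::real_vector set \<Rightarrow> ('a \<Rightarrow> real) \<Rightarrow> 'a set \<Rightarrow> bool" where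
  "dense_in X N D \<longleftrightarrow> D \<subseteq> X \<and> (\<forall>x\<in>X. \<forall>e>0. \<exists>d\<in>D. N (x - d) < e)"

definition separable_banach :: "'a::real_vector set \<Rightarrow> ('a \<Rightarrow> real) \<Rightarrow> bool" where
  "separable_banach X N \<longleftrightarrow> banach_on X N \<and> (\<exists>D. countable D \<and> dense_in X N D)"

(* Conditions (F1)-(F3) for a sequence of separable Banach spaces *)
definition F_seq :: "(nat \<Rightarrow> 'a::real_vector set) \<Rightarrow> (nat \<Rightarrow> 'a \<Rightarrow> real) \<Rightarrow> bool" where
  "F_seq X N \<longleftrightarrow> (\<forall>s. separable_banach (X s) (N s))
     \<and> (\<exists>x\<in>(\<Inter>s. X s). x \<noteq> 0) \<and> (\<forall>s. X (Suc s) \<subseteq> X s)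
     \<and> (\<forall>s. \<forall>x\<in>X (Suc s). N s x \<le> N (Suc s) x)
     \<and> (\<forall>s. dense_in (X s) (N s) (\<Inter>r. X r))"

definition bounded_functional_on :: "'a::real_vector set \<Rightarrow> ('a \<Rightarrow> real) \<Rightarrow> ('a \<Rightarrow> real) \<Rightarrow> bool" where
  "bounded_functional_on X N g \<longleftrightarrow> (\<forall>x\<in>X. \<forall>y\<in>X. g (x + y) = g x + g y)
     \<and> (\<forall>x\<in>X. \<forall>c. g (c *\<^sub>R x) = c * g x) \<and> (\<exists>K. \<forall>x\<in>X. \<bar>g x\<bar> \<le> K * N x)"

definition dual_set :: "'a::real_vector set \<Rightarrow> ('a \<Rightarrow> real) \<Rightarrow> ('a \<Rightarrow> real) set" where
  "dual_set X N = {g. bounded_functional_on X N g}"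

definition fnorm :: "'a::real_vector set \<Rightarrow> ('a \<Rightarrow> real) \<Rightarrow> ('a \<Rightarrow> real) \<Rightarrow> real" where
  "fnorm X N g = Inf {K. 0 \<le> K \<and> (\<forall>x\<in>X. \<bar>g x\<bar> \<le> K * N x)}"

(* Dual of the Frechet space X_F = \<Inter> X_s *)
definition frechet_dual :: "(nat \<Rightarrow> 'a::real_vector set) \<Rightarrow> (nat \<Rightarrow> 'a \<Rightarrow> real) \<Rightarrow> ('a \<Rightarrow> real) set" where
  "frechet_dual X N = {g. (\<forall>x\<in>(\<Inter>r. X r). \<forall>y\<in>(\<Inter>r. X r). g (x + y) = g x + g y)
      \<and> (\<forall>x\<in>(\<Inter>r. X r). \<forall>c. g (c *\<^sub>R x) = c * g x)
      \<and> (\<exists>s K. \<forall>x\<in>(\<Inter>r. X r). \<bar>g x\<bar> \<le> K * N s x)}"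

definition reflexive_on :: "'a::real_vector set \<Rightarrow> ('a \<Rightarrow> real) \<Rightarrow> bool" where
  "reflexive_on X N \<longleftrightarrow> (\<forall>\<phi>.
       ((\<forall>h1\<in>dual_set X N. \<forall>h2\<in>dual_set X N. \<phi> (\<lambda>x. h1 x + h2 x) = \<phi> h1 + \<phi> h2)
        \<and> (\<forall>h\<in>dual_set X N. \<forall>c. \<phi> (\<lambda>x. c * h x) = c * \<phi> h)
        \<and> (\<exists>K. \<forall>h\<in>dual_set X N. \<bar>\<phi> h\<bar> \<le> K * fnorm X N h)) \<longrightarrow>
       (\<exists>x\<in>X. \<forall>h\<in>dual_set X N. \<phi> h = h x))"

(* Sequence spaces (indices start at 0) *)
definition e_vec :: "nat \<Rightarrow> nat \<Rightarrow> real" where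
  "e_vec i = (\<lambda>j. if j = i then 1 else 0)"

definition BK_space :: "(nat \<Rightarrow> real) set \<Rightarrow> ((nat \<Rightarrow> real) \<Rightarrow> real) \<Rightarrow> bool" where
  "BK_space \<Theta> T \<longleftrightarrow> banach_on \<Theta> T \<and> (\<forall>i. \<exists>C. \<forall>c\<in>\<Theta>. \<bar>c i\<bar> \<le> C * T c)"

definition lambda_BK :: "(nat \<Rightarrow> real) set \<Rightarrow> ((nat \<Rightarrow> real) \<Rightarrow> real) \<Rightarrow> real \<Rightarrow> bool" where
  "lambda_BK \<Theta> T l \<longleftrightarrow> BK_space \<Theta> T \<and> (\<forall>i. e_vec i \<in> \<Theta>)
     \<and> (\<forall>c\<in>\<Theta>. \<forall>n. T (\<Sum>i<n. c i *\<^sub>R e_vec i) \<le> l * T c)"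

definition CB_space :: "(nat \<Rightarrow> real) set \<Rightarrow> ((nat \<Rightarrow> real) \<Rightarrow> real) \<Rightarrow> bool" where
  "CB_space \<Theta> T \<longleftrightarrow> BK_space \<Theta> T \<and> (\<forall>i. e_vec i \<in> \<Theta>)
     \<and> (\<forall>c\<in>\<Theta>. (\<lambda>n. T (c - (\<Sum>i<n. c i *\<^sub>R e_vec i))) \<longlonglongrightarrow> 0)"

(* The dual \<Theta>^* identified with the sequence space {g(e_i)} normed by \<parallel>g\<parallel> *)
definition seq_dual :: "(nat \<Rightarrow> real) set \<Rightarrow> ((nat \<Rightarrow> real) \<Rightarrow> real) \<Rightarrow> (nat \<Rightarrow> real) set" where
  "seq_dual \<Theta> T = {c. \<exists>g\<in>dual_set \<Theta> T. \<forall>i. c i = g (e_vec i)}"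

definition seq_dual_norm :: "(nat \<Rightarrow> real) set \<Rightarrow> ((nat \<Rightarrow> real) \<Rightarrow> real) \<Rightarrow> (nat \<Rightarrow> real) \<Rightarrow> real" where
  "seq_dual_norm \<Theta> T c = fnorm \<Theta> T (SOME g. g \<in> dual_set \<Theta> T \<and> (\<forall>i. c i = g (e_vec i)))"

definition theta_frame :: "'a::real_vector set \<Rightarrow> ('a \<Rightarrow> real) \<Rightarrow> (nat \<Rightarrow> real) set
     \<Rightarrow> ((nat \<Rightarrow> real) \<Rightarrow> real) \<Rightarrow> (nat \<Rightarrow> 'a \<Rightarrow> real) \<Rightarrow> bool" where
  "theta_frame X N \<Theta> T g \<longleftrightarrow> (\<forall>i. g i \<in> dual_set X N) \<and> (\<forall>f\<in>X. (\<lambda>i. g i f) \<in> \<Theta>)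
     \<and> (\<exists>A B. 0 < A \<and> (\<forall>f\<in>X. A * N f \<le> T (\<lambda>i. g i f) \<and> T (\<lambda>i. g i f) \<le> B * N f))"

definition bounded_op :: "(nat \<Rightarrow> real) set \<Rightarrow> ((nat \<Rightarrow> real) \<Rightarrow> real)
     \<Rightarrow> 'a::real_vector set \<Rightarrow> ('a \<Rightarrow> real) \<Rightarrow> ((nat \<Rightarrow> real) \<Rightarrow> 'a) \<Rightarrow> bool" where
  "bounded_op \<Theta> T X N V \<longleftrightarrow> (\<forall>c\<in>\<Theta>. V c \<in> X)
     \<and> (\<forall>c\<in>\<Theta>. \<forall>d\<in>\<Theta>. V (c + d) = V c + V d) \<and> (\<forall>c\<in>\<Theta>. \<forall>a. V (a *\<^sub>R c) = a *\<^sub>R V c)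
     \<and> (\<exists>K. \<forall>c\<in>\<Theta>. N (V c) \<le> K * T c)"

definition banach_frame :: "'a::real_vector set \<Rightarrow> ('a \<Rightarrow> real) \<Rightarrow> (nat \<Rightarrow> real) set
     \<Rightarrow> ((nat \<Rightarrow> real) \<Rightarrow> real) \<Rightarrow> (nat \<Rightarrow> 'a \<Rightarrow> real) \<Rightarrow> bool" where
  "banach_frame X N \<Theta> T g \<longleftrightarrow> theta_frame X N \<Theta> T g
     \<and> (\<exists>V. bounded_op \<Theta> T X N V \<and> (\<forall>f\<in>X. V (\<lambda>i. g i f) = f))"

(* Sequences {f_i} \<subseteq> X viewed as acting on X^* via h \<mapsto> {h(f_i)} *)
definition dual_bessel :: "'a::real_vector set \<Rightarrow> ('a \<Rightarrow> real) \<Rightarrow> (nat \<Rightarrow> real) set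
     \<Rightarrow> ((nat \<Rightarrow> real) \<Rightarrow> real) \<Rightarrow> (nat \<Rightarrow> 'a) \<Rightarrow> bool" where
  "dual_bessel X N \<Theta> T f \<longleftrightarrow> (\<forall>i. f i \<in> X) \<and> (\<forall>h\<in>dual_set X N. (\<lambda>i. h (f i)) \<in> \<Theta>)
     \<and> (\<exists>B. \<forall>h\<in>dual_set X N. T (\<lambda>i. h (f i)) \<le> B * fnorm X N h)"

definition dual_frame :: "'a::real_vector set \<Rightarrow> ('a \<Rightarrow> real) \<Rightarrow> (nat \<Rightarrow> real) set
     \<Rightarrow> ((nat \<Rightarrow> real) \<Rightarrow> real) \<Rightarrow> (nat \<Rightarrow> 'a) \<Rightarrow> bool" where
  "dual_frame X N \<Theta> T f \<longleftrightarrow> (\<forall>i. f i \<in> X) \<and> (\<forall>h\<in>dual_set X N. (\<lambda>i. h (f i)) \<in> \<Theta>)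
     \<and> (\<exists>A B. 0 < A \<and> (\<forall>h\<in>dual_set X N. A * fnorm X N h \<le> T (\<lambda>i. h (f i))
                                         \<and> T (\<lambda>i. h (f i)) \<le> B * fnorm X N h))"

(* Banach frame for X^* w.r.t. \<Theta>; functionals are identified when they agree on X *)
definition dual_banach_frame :: "'a::real_vector set \<Rightarrow> ('a \<Rightarrow> real) \<Rightarrow> (nat \<Rightarrow> real) set
     \<Rightarrow> ((nat \<Rightarrow> real) \<Rightarrow> real) \<Rightarrow> (nat \<Rightarrow> 'a) \<Rightarrow> bool" where
  "dual_banach_frame X N \<Theta> T f \<longleftrightarrow> dual_frame X N \<Theta> T f
     \<and> (\<exists>V. (\<forall>c\<in>\<Theta>. V c \<in> dual_set X N)
          \<and> (\<forall>c\<in>\<Theta>. \<forall>d\<in>\<Theta>. \<forall>x\<in>X. V (c + d) x = V c x + V d x)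
          \<and> (\<forall>c\<in>\<Theta>. \<forall>a. \<forall>x\<in>X. V (a *\<^sub>R c) x = a * V c x)
          \<and> (\<exists>K. \<forall>c\<in>\<Theta>. fnorm X N (V c) \<le> K * T c)
          \<and> (\<forall>h\<in>dual_set X N. \<forall>x\<in>X. V (\<lambda>i. h (f i)) x = h x))"

definition pre_F_frame :: "(nat \<Rightarrow> 'a::real_vector set) \<Rightarrow> (nat \<Rightarrow> 'a \<Rightarrow> real)
     \<Rightarrow> (nat \<Rightarrow> (nat \<Rightarrow> real) set) \<Rightarrow> (nat \<Rightarrow> (nat \<Rightarrow> real) \<Rightarrow> real) \<Rightarrow> (nat \<Rightarrow> 'a \<Rightarrow> real) \<Rightarrow> bool" where
  "pre_F_frame X N \<Theta> T g \<longleftrightarrow> (\<forall>i. g i \<in> frechet_dual X N)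
     \<and> (\<forall>f\<in>(\<Inter>r. X r). (\<lambda>i. g i f) \<in> (\<Inter>r. \<Theta> r))
     \<and> (\<forall>s. \<exists>A B. 0 < A \<and> A \<le> B \<and> (\<forall>f\<in>(\<Inter>r. X r).
            A * N s f \<le> T s (\<lambda>i. g i f) \<and> T s (\<lambda>i. g i f) \<le> B * N s f))"

definition F_frame :: "(nat \<Rightarrow> 'a::real_vector set) \<Rightarrow> (nat \<Rightarrow> 'a \<Rightarrow> real)
     \<Rightarrow> (nat \<Rightarrow> (nat \<Rightarrow> real) set) \<Rightarrow> (nat \<Rightarrow> (nat \<Rightarrow> real) \<Rightarrow> real) \<Rightarrow> (nat \<Rightarrow> 'a \<Rightarrow> real) \<Rightarrow> bool" where
  "F_frame X N \<Theta> T g \<longleftrightarrow> pre_F_frame X N \<Theta> T g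
     \<and> (\<exists>V. (\<forall>c\<in>(\<Inter>r. \<Theta> r). V c \<in> (\<Inter>r. X r))
          \<and> (\<forall>c\<in>(\<Inter>r. \<Theta> r). \<forall>d\<in>(\<Inter>r. \<Theta> r). V (c + d) = V c + V d)
          \<and> (\<forall>c\<in>(\<Inter>r. \<Theta> r). \<forall>a. V (a *\<^sub>R c) = a *\<^sub>R V c)
          \<and> (\<forall>s. \<exists>K. \<forall>c\<in>(\<Inter>r. \<Theta> r). N s (V c) \<le> K * T s c)
          \<and> (\<forall>f\<in>(\<Inter>r. X r). V (\<lambda>i. g i f) = f))"

(* g_i^s: the (unique) continuous extension of g_i from X_F to X_s *)
definition F_ext :: "(nat \<Rightarrow> 'a::real_vector set) \<Rightarrow> (nat \<Rightarrow> 'a \<Rightarrow> real) \<Rightarrow> (nat \<Rightarrow> 'a \<Rightarrow> real)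
     \<Rightarrow> nat \<Rightarrow> nat \<Rightarrow> 'a \<Rightarrow> real" where
  "F_ext X N g s i = (SOME h. h \<in> dual_set (X s) (N s) \<and> (\<forall>x\<in>(\<Inter>r. X r). h x = g i x))"

definition DF_bessel :: "(nat \<Rightarrow> 'a::real_vector set) \<Rightarrow> (nat \<Rightarrow> 'a \<Rightarrow> real)
     \<Rightarrow> (nat \<Rightarrow> (nat \<Rightarrow> real) set) \<Rightarrow> (nat \<Rightarrow> (nat \<Rightarrow> real) \<Rightarrow> real) \<Rightarrow> (nat \<Rightarrow> 'a) \<Rightarrow> bool" where
  "DF_bessel X N \<Theta> T f \<longleftrightarrow> (\<forall>s. dual_bessel (X s) (N s) (seq_dual (\<Theta> s) (T s)) (seq_dual_norm (\<Theta> s) (T s)) f)"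

definition pre_DF_frame :: "(nat \<Rightarrow> 'a::real_vector set) \<Rightarrow> (nat \<Rightarrow> 'a \<Rightarrow> real)
     \<Rightarrow> (nat \<Rightarrow> (nat \<Rightarrow> real) set) \<Rightarrow> (nat \<Rightarrow> (nat \<Rightarrow> real) \<Rightarrow> real) \<Rightarrow> (nat \<Rightarrow> 'a) \<Rightarrow> bool" where
  "pre_DF_frame X N \<Theta> T f \<longleftrightarrow> (\<forall>s. dual_frame (X s) (N s) (seq_dual (\<Theta> s) (T s)) (seq_dual_norm (\<Theta> s) (T s)) f)"

definition DF_frame :: "(nat \<Rightarrow> 'a::real_vector set) \<Rightarrow> (nat \<Rightarrow> 'a \<Rightarrow> real)
     \<Rightarrow> (nat \<Rightarrow> (nat \<Rightarrow> real) set) \<Rightarrow> (nat \<Rightarrow> (nat \<Rightarrow> real) \<Rightarrow> real) \<Rightarrow> (nat \<Rightarrow> 'a) \<Rightarrow> bool" where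
  "DF_frame X N \<Theta> T f \<longleftrightarrow> (\<forall>s. dual_banach_frame (X s) (N s) (seq_dual (\<Theta> s) (T s)) (seq_dual_norm (\<Theta> s) (T s)) f)"

definition exp_XF :: "(nat \<Rightarrow> 'a::real_vector set) \<Rightarrow> (nat \<Rightarrow> 'a \<Rightarrow> real) \<Rightarrow> (nat \<Rightarrow> 'a \<Rightarrow> real) \<Rightarrow> (nat \<Rightarrow> 'a) \<Rightarrow> bool" where
  "exp_XF X N g f \<longleftrightarrow> (\<forall>x\<in>(\<Inter>r. X r). \<forall>s. (\<lambda>n. N s (x - (\<Sum>i<n. g i x *\<^sub>R f i))) \<longlonglongrightarrow> 0)"

(* convergence in X_F^* : weak-* (pointwise on X_F) *)
definition exp_XF_dual :: "(nat \<Rightarrow> 'a::real_vector set) \<Rightarrow> (nat \<Rightarrow> 'a \<Rightarrow> real) \<Rightarrow> (nat \<Rightarrow> 'a \<Rightarrow> real) \<Rightarrow> (nat \<Rightarrow> 'a) \<Rightarrow> bool" where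
  "exp_XF_dual X N g f \<longleftrightarrow> (\<forall>h\<in>frechet_dual X N. \<forall>x\<in>(\<Inter>r. X r).
       (\<lambda>n. \<Sum>i<n. h (f i) * g i x) \<longlonglongrightarrow> h x)"

definition exp_Xs :: "(nat \<Rightarrow> 'a::real_vector set) \<Rightarrow> (nat \<Rightarrow> 'a \<Rightarrow> real) \<Rightarrow> (nat \<Rightarrow> 'a \<Rightarrow> real) \<Rightarrow> (nat \<Rightarrow> 'a) \<Rightarrow> bool" where
  "exp_Xs X N g f \<longleftrightarrow> (\<forall>s. \<forall>x\<in>X s. (\<lambda>n. N s (x - (\<Sum>i<n. F_ext X N g s i x *\<^sub>R f i))) \<longlonglongrightarrow> 0)"

definition exp_Xs_dual :: "(nat \<Rightarrow> 'a::real_vector set) \<Rightarrow> (nat \<Rightarrow> 'a \<Rightarrow> real) \<Rightarrow> (nat \<Rightarrow> 'a \<Rightarrow> real) \<Rightarrow> (nat \<Rightarrow> 'a) \<Rightarrow> bool" where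
  "exp_Xs_dual X N g f \<longleftrightarrow> (\<forall>s. \<forall>h\<in>dual_set (X s) (N s).
       (\<lambda>n. fnorm (X s) (N s) (\<lambda>x. h x - (\<Sum>i<n. h (f i) * F_ext X N g s i x))) \<longlonglongrightarrow> 0)"

end

theory Submission
  imports Defs
begin

(*
  Let U x = (g_i x)_i be the analysis operator and V the F-bounded synthesis
  operator, V (U x) = x on X_F.  Since X_F is dense in every X_s and \<Theta>_F in every \<Theta>_s,
  both extend to bounded operators U_s : X_s \<rightarrow> \<Theta>_s and V_s : \<Theta>_s \<rightarrow> X_s (ana s and
  syn s below), and V_s \<circ> U_s = id by density; the coordinates of U_s are the extensions
  g_i^s.  This is part (a).  For (b)-(d) take f_i = V e_i.  In a CB-space c = \<Sum> c_i e_i,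
  so V_s c = \<Sum> c_i f_i, which gives the expansions of elements; a functional h on X_s
  corresponds to h \<circ> V_s on \<Theta>_s with coefficients (h f_i), which gives the DF-frame bounds
  and the dual synthesis operator.  The expansion of functionals needs the canonical basis
  of each \<Theta>_s to be shrinking; this holds when \<Theta>_s^* is a CB-space, and for reflexive
  \<lambda>-BK-spaces by a weak compactness (Tychonoff) argument.
*)

lemma norm_onD:
  assumes "is_norm_on X N"
  shows "0 \<in> X" "\<And>x y. x \<in> X \<Longrightarrow> y \<in> X \<Longrightarrow> x + y \<in> X" "\<And>x c. x \<in> X \<Longrightarrow> c *\<^sub>R x \<in> X"
    "\<And>x. x \<in> X \<Longrightarrow> 0 \<le> N x" "\<And>x. x \<in> X \<Longrightarrow> N x = 0 \<longleftrightarrow> x = 0"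
    "\<And>x c. x \<in> X \<Longrightarrow> N (c *\<^sub>R x) = \<bar>c\<bar> * N x"
    "\<And>x y. x \<in> X \<Longrightarrow> y \<in> X \<Longrightarrow> N (x + y) \<le> N x + N y"
  using assms unfolding is_norm_on_def by auto

lemma norm_on_diff:
  assumes "is_norm_on X N" "x \<in> X" "y \<in> X"
  shows "x - y \<in> X"
proof -
  have "x - y = x + (-1) *\<^sub>R y" by simp
  thus ?thesis using norm_onD(2,3)[OF assms(1)] assms(2,3) by metis
qed

lemma norm_on_zero: "is_norm_on X N \<Longrightarrow> N 0 = 0"
  using norm_onD(1,5) by blast

lemma norm_on_commute:
  assumes "is_norm_on X N" "x \<in> X" "y \<in> X"
  shows "N (x - y) = N (y - x)"
proof -
  have "N ((-1) *\<^sub>R (y - x)) = N (y - x)"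
    using norm_onD(6)[OF assms(1) norm_on_diff[OF assms(1,3,2)], of "-1"] by simp
  then show ?thesis by simp
qed

lemma norm_on_triangle:
  assumes "is_norm_on X N" "x \<in> X" "y \<in> X" "z \<in> X"
  shows "N (x - z) \<le> N (x - y) + N (y - z)"
proof -
  have "x - z = (x - y) + (y - z)" by simp
  thus ?thesis
    using norm_onD(7)[OF assms(1) norm_on_diff[OF assms(1,2,3)] norm_on_diff[OF assms(1,3,4)]] by simp
qed

lemma norm_on_diff_le:
  assumes "is_norm_on X N" "x \<in> X" "y \<in> X"
  shows "N (x - y) \<le> N x + N y"
  using norm_on_triangle[OF assms(1,2) norm_onD(1)[OF assms(1)] assms(3)]
    norm_on_commute[OF assms(1) norm_onD(1)[OF assms(1)] assms(3)] by simp

lemma norm_on_triangle_add: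
  assumes "is_norm_on X N" "x \<in> X" "y \<in> X" "x' \<in> X" "y' \<in> X"
  shows "N ((x + y) - (x' + y')) \<le> N (x - x') + N (y - y')"
proof -
  have eq: "(x + y) - (x' + y') = (x - x') + (y - y')" by simp
  show ?thesis unfolding eq
    using norm_onD(7)[OF assms(1) norm_on_diff[OF assms(1,2,4)] norm_on_diff[OF assms(1,3,5)]] by simp
qed

lemma norm_on_lincomb:
  assumes "is_norm_on X N" "\<And>i. i < (n::nat) \<Longrightarrow> v i \<in> X"
  shows "(\<Sum>i<n. c i *\<^sub>R v i) \<in> X"
  using assms(2) by (induction n) (simp_all add: norm_onD(1,2,3)[OF assms(1)])

lemma norm_on_subspace:
  assumes "is_norm_on X N" "D \<subseteq> X" "D \<noteq> {}"
    "\<forall>x\<in>D. \<forall>y\<in>D. x + y \<in> D" "\<forall>x\<in>D. \<forall>c. c *\<^sub>R x \<in> D"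
  shows "is_norm_on D N"
proof -
  obtain d where "d \<in> D" using assms(3) by auto
  then have "0 \<in> D" using assms(5) by (metis scaleR_zero_left)
  thus ?thesis using assms(1,2,4,5) unfolding is_norm_on_def subset_iff by auto
qed

lemma norm_on_limit_unique:
  assumes Y: "is_norm_on Y M" and "\<And>n. u n \<in> Y" "a \<in> Y" "b \<in> Y"
    and "(\<lambda>n. M (u n - a)) \<longlonglongrightarrow> 0" "(\<lambda>n. M (u n - b)) \<longlonglongrightarrow> 0"
  shows "a = b"
proof -
  have ab: "a - b \<in> Y" using norm_on_diff[OF Y assms(3,4)] .
  have "M (a - b) \<le> M (u n - a) + M (u n - b)" for n
    using norm_on_triangle[OF Y assms(3) assms(2) assms(4)] norm_on_commute[OF Y assms(3) assms(2)] by simp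
  then have "M (a - b) \<le> 0"
    using LIMSEQ_le_const[OF tendsto_add[OF assms(5,6)]] by simp
  thus ?thesis using norm_onD(4,5)[OF Y ab] by simp
qed

lemma dense_approx:
  assumes D: "dense_in X N D" and x: "x \<in> X" and X: "is_norm_on X N"
  obtains s where "\<And>n. s n \<in> D" "(\<lambda>n. N (x - s n)) \<longlonglongrightarrow> 0"
proof -
  have "\<forall>n. \<exists>d\<in>D. N (x - d) < inverse (real (Suc n))"
    using D x unfolding dense_in_def by simp
  then obtain s where s: "\<And>n. s n \<in> D" "\<And>n. N (x - s n) < inverse (real (Suc n))" by metis
  have "(\<lambda>n. N (x - s n)) \<longlonglongrightarrow> 0"
  proof (rule Lim_null_comparison[OF always_eventually LIMSEQ_inverse_real_of_nat], rule allI)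
    fix n
    have "s n \<in> X" using s(1) D unfolding dense_in_def by auto
    then have "0 \<le> N (x - s n)" using norm_onD(4)[OF X norm_on_diff[OF X x]] by blast
    thus "norm (N (x - s n)) \<le> inverse (real (Suc n))" using s(2)[of n] by simp
  qed
  with s(1) show ?thesis by (rule that)
qed

definition lin_on :: "'a::real_vector set \<Rightarrow> ('a \<Rightarrow> 'b::real_vector) \<Rightarrow> bool" where
  "lin_on X L \<longleftrightarrow> (\<forall>x\<in>X. \<forall>y\<in>X. L (x + y) = L x + L y) \<and> (\<forall>x\<in>X. \<forall>c. L (c *\<^sub>R x) = c *\<^sub>R L x)"

lemma lin_onD:
  assumes "lin_on X L"
  shows "\<And>x y. x \<in> X \<Longrightarrow> y \<in> X \<Longrightarrow> L (x + y) = L x + L y" "\<And>x c. x \<in> X \<Longrightarrow> L (c *\<^sub>R x) = c *\<^sub>R L x"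
  using assms unfolding lin_on_def by auto

lemma lin_on_zero: "lin_on X L \<Longrightarrow> 0 \<in> X \<Longrightarrow> L 0 = 0"
  using lin_onD(2)[of X L 0 0] by simp

lemma lin_on_diff:
  assumes "lin_on X L" "is_norm_on X N" "x \<in> X" "y \<in> X"
  shows "L (x - y) = L x - L y"
proof -
  have "x - y = x + (-1) *\<^sub>R y" by simp
  thus ?thesis
    using lin_onD(1)[OF assms(1,3) norm_onD(3)[OF assms(2,4), of "-1"]] lin_onD(2)[OF assms(1,4), of "-1"]
    by simp
qed

lemma lin_on_lincomb:
  assumes "lin_on X L" "is_norm_on X N" "\<And>i. i < (n::nat) \<Longrightarrow> v i \<in> X"
  shows "L (\<Sum>i<n. c i *\<^sub>R v i) = (\<Sum>i<n. c i *\<^sub>R L (v i))"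
  using assms(3)
proof (induction n)
  case 0
  then show ?case using lin_on_zero[OF assms(1) norm_onD(1)[OF assms(2)]] by simp
next
  case (Suc n)
  have "(\<Sum>i<n. c i *\<^sub>R v i) \<in> X" using norm_on_lincomb[OF assms(2)] Suc.prems by simp
  then show ?case using Suc lin_onD[OF assms(1)] norm_onD(3)[OF assms(2)] by simp
qed

lemma lin_on_comp:
  assumes "lin_on X G" "\<forall>x\<in>X. G x \<in> Y" "lin_on Y V"
  shows "lin_on X (\<lambda>x. V (G x))"
  using assms unfolding lin_on_def by simp

definition bdd_lin_map :: "'a::real_vector set \<Rightarrow> ('a \<Rightarrow> real) \<Rightarrow> 'b::real_vector set
     \<Rightarrow> ('b \<Rightarrow> real) \<Rightarrow> ('a \<Rightarrow> 'b) \<Rightarrow> bool" where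
  "bdd_lin_map X N Y M L \<longleftrightarrow> lin_on X L \<and> (\<forall>x\<in>X. L x \<in> Y) \<and> (\<exists>K>0. \<forall>x\<in>X. M (L x) \<le> K * N x)"

lemma bdd_lin_map_comp:
  assumes X: "is_norm_on X N" and G: "bdd_lin_map X N Y M G" and V: "bdd_lin_map Y M Z P V"
  shows "bdd_lin_map X N Z P (\<lambda>x. V (G x))"
proof -
  obtain KG where KG: "KG > 0" "\<forall>x\<in>X. M (G x) \<le> KG * N x" using G unfolding bdd_lin_map_def by blast
  obtain KV where KV: "KV > 0" "\<forall>y\<in>Y. P (V y) \<le> KV * M y" using V unfolding bdd_lin_map_def by blast
  have "P (V (G x)) \<le> (KV * KG) * N x" if x: "x \<in> X" for x
  proof -
    have "P (V (G x)) \<le> KV * M (G x)" using KV(2) G x unfolding bdd_lin_map_def by blast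
    also have "\<dots> \<le> KV * (KG * N x)" using KG(2) KV(1) x by (intro mult_left_mono) auto
    finally show ?thesis by (simp add: mult.assoc)
  qed
  then show ?thesis using G V KG(1) KV(1) lin_on_comp[of X G Y V]
    unfolding bdd_lin_map_def by (metis mult_pos_pos)
qed

lemma dual_set_lin: "g \<in> dual_set X N \<Longrightarrow> lin_on X g"
  unfolding dual_set_def bounded_functional_on_def lin_on_def by auto

lemma dual_setI:
  assumes "lin_on X g" "\<forall>x\<in>X. \<bar>g x\<bar> \<le> K * N x"
  shows "g \<in> dual_set X N"
  using assms unfolding dual_set_def bounded_functional_on_def lin_on_def by auto

lemma dual_set_bound:
  assumes X: "is_norm_on X N" and g: "g \<in> dual_set X N"
  obtains K where "K \<ge> 0" "\<forall>x\<in>X. \<bar>g x\<bar> \<le> K * N x"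
proof -
  obtain K where K: "\<forall>x\<in>X. \<bar>g x\<bar> \<le> K * N x"
    using g unfolding dual_set_def bounded_functional_on_def by auto
  have "K * N x \<le> max K 0 * N x" if "x \<in> X" for x
    using norm_onD(4)[OF X that] by (intro mult_right_mono) auto
  with K have "\<forall>x\<in>X. \<bar>g x\<bar> \<le> max K 0 * N x" by force
  then show ?thesis by (rule that[rotated]) simp
qed

lemma dual_set_add:
  assumes X: "is_norm_on X N" and "G1 \<in> dual_set X N" "G2 \<in> dual_set X N"
  shows "(\<lambda>z. G1 z + G2 z) \<in> dual_set X N"
proof -
  obtain K1 where K1: "\<forall>x\<in>X. \<bar>G1 x\<bar> \<le> K1 * N x" using dual_set_bound[OF X assms(2)] by blast
  obtain K2 where K2: "\<forall>x\<in>X. \<bar>G2 x\<bar> \<le> K2 * N x" using dual_set_bound[OF X assms(3)] by blast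
  have "lin_on X (\<lambda>z. G1 z + G2 z)"
    using dual_set_lin[OF assms(2)] dual_set_lin[OF assms(3)] unfolding lin_on_def by (simp add: distrib_left)
  moreover have "\<forall>x\<in>X. \<bar>G1 x + G2 x\<bar> \<le> (K1 + K2) * N x"
    using K1 K2 by (auto simp: distrib_right intro: order_trans[OF abs_triangle_ineq add_mono])
  ultimately show ?thesis by (rule dual_setI)
qed

lemma dual_set_scale:
  assumes X: "is_norm_on X N" and "G \<in> dual_set X N"
  shows "(\<lambda>z. a * G z) \<in> dual_set X N"
proof -
  obtain K where K: "K \<ge> 0" "\<forall>x\<in>X. \<bar>G x\<bar> \<le> K * N x" using dual_set_bound[OF X assms(2)] by blast
  have "lin_on X (\<lambda>z. a * G z)"
    using dual_set_lin[OF assms(2)] unfolding lin_on_def by (simp add: distrib_left mult.left_commute)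
  moreover have "\<forall>x\<in>X. \<bar>a * G x\<bar> \<le> (\<bar>a\<bar> * K) * N x"
    using K(2) by (auto simp: abs_mult mult.assoc intro: mult_left_mono)
  ultimately show ?thesis by (rule dual_setI)
qed

lemma fnorm_le:
  assumes "0 \<le> K" "\<forall>x\<in>X. \<bar>g x\<bar> \<le> K * N x"
  shows "fnorm X N g \<le> K"
  unfolding fnorm_def by (rule cInf_lower) (use assms in \<open>auto intro!: bdd_belowI[of _ 0]\<close>)

lemma fnorm_nonneg:
  assumes "0 \<le> K" "\<forall>x\<in>X. \<bar>g x\<bar> \<le> K * N x"
  shows "0 \<le> fnorm X N g"
  using assms unfolding fnorm_def by (intro cInf_greatest) auto

lemma fnorm_bound:
  assumes X: "is_norm_on X N" and K: "0 \<le> K" "\<forall>x\<in>X. \<bar>g x\<bar> \<le> K * N x" and x: "x \<in> X"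
  shows "\<bar>g x\<bar> \<le> fnorm X N g * N x"
proof (cases "N x = 0")
  case True
  then show ?thesis using K x by fastforce
next
  case False
  then have pos: "N x > 0" using norm_onD(4)[OF X x] by simp
  have "\<bar>g x\<bar> / N x \<le> fnorm X N g" unfolding fnorm_def
    by (rule cInf_greatest) (use K x pos in \<open>auto simp: divide_le_eq\<close>)
  thus ?thesis using pos by (simp add: divide_le_eq)
qed

lemma dual_fnorm_nonneg: "is_norm_on X N \<Longrightarrow> g \<in> dual_set X N \<Longrightarrow> 0 \<le> fnorm X N g"
  by (metis dual_set_bound fnorm_nonneg)

lemma dual_fnorm_bound: "is_norm_on X N \<Longrightarrow> g \<in> dual_set X N \<Longrightarrow> x \<in> X \<Longrightarrow> \<bar>g x\<bar> \<le> fnorm X N g * N x"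
  by (metis dual_set_bound fnorm_bound)

lemma fnorm_witness:
  assumes "0 \<le> r" "r < fnorm X N g"
  obtains x where "x \<in> X" "r * N x < \<bar>g x\<bar>"
  using fnorm_le[OF assms(1), of X g N] assms(2) by (force simp: not_less)

lemma fnorm_cong: "\<forall>x\<in>X. g x = h x \<Longrightarrow> fnorm X N g = fnorm X N h"
  unfolding fnorm_def by simp

lemma dual_set_pullback:
  assumes Y: "is_norm_on Y T" and X: "is_norm_on X N" and h: "h \<in> dual_set X N"
    and V: "lin_on Y V" "\<forall>c\<in>Y. V c \<in> X" "\<forall>c\<in>Y. N (V c) \<le> K * T c" and K: "0 \<le> K"
  shows "(\<lambda>c. h (V c)) \<in> dual_set Y T" "fnorm Y T (\<lambda>c. h (V c)) \<le> fnorm X N h * K"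
proof -
  have b: "\<forall>c\<in>Y. \<bar>h (V c)\<bar> \<le> (fnorm X N h * K) * T c"
  proof
    fix c assume c: "c \<in> Y"
    have "\<bar>h (V c)\<bar> \<le> fnorm X N h * N (V c)" using dual_fnorm_bound[OF X h] V(2) c by auto
    also have "\<dots> \<le> fnorm X N h * (K * T c)"
      using V(3) c dual_fnorm_nonneg[OF X h] by (intro mult_left_mono) auto
    finally show "\<bar>h (V c)\<bar> \<le> (fnorm X N h * K) * T c" by (simp add: mult.assoc)
  qed
  show "(\<lambda>c. h (V c)) \<in> dual_set Y T"
    using dual_setI[OF lin_on_comp[OF V(1,2) dual_set_lin[OF h]] b] .
  show "fnorm Y T (\<lambda>c. h (V c)) \<le> fnorm X N h * K"
    by (rule fnorm_le[OF _ b]) (use dual_fnorm_nonneg[OF X h] K in simp)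
qed

section \<open>Bounded linear maps on dense subspaces\<close>

lemma bdd_lin_map_dense_unique:
  assumes X: "is_norm_on X N" and Y: "is_norm_on Y M" and D: "dense_in X N D"
    and L1: "bdd_lin_map X N Y M L1" and L2: "bdd_lin_map X N Y M L2"
    and eq: "\<forall>d\<in>D. L1 d = L2 d" and x: "x \<in> X"
  shows "L1 x = L2 x"
proof -
  obtain K1 where K1: "\<forall>x\<in>X. M (L1 x) \<le> K1 * N x" using L1 unfolding bdd_lin_map_def by blast
  obtain K2 where K2: "\<forall>x\<in>X. M (L2 x) \<le> K2 * N x" using L2 unfolding bdd_lin_map_def by blast
  have LY: "L1 z \<in> Y" "L2 z \<in> Y" if "z \<in> X" for z using L1 L2 that unfolding bdd_lin_map_def by auto
  obtain s where s: "\<And>n. s n \<in> D" "(\<lambda>n. N (x - s n)) \<longlonglongrightarrow> 0" using dense_approx[OF D x X] by blast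
  have sX: "s n \<in> X" for n using s(1) D unfolding dense_in_def by auto
  have "M (L1 x - L2 x) \<le> (K1 + K2) * N (x - s n)" for n
  proof -
    have xs: "x - s n \<in> X" using norm_on_diff[OF X x sX] .
    have lin: "lin_on X L1" "lin_on X L2" using L1 L2 unfolding bdd_lin_map_def by auto
    have "L1 (x - s n) - L2 (x - s n) = L1 x - L2 x"
      using lin_on_diff[OF lin(1) X x sX] lin_on_diff[OF lin(2) X x sX] eq s(1)[of n] by simp
    then have "L1 x - L2 x = L1 (x - s n) - L2 (x - s n)" by simp
    also have "M \<dots> \<le> M (L1 (x - s n)) + M (L2 (x - s n))"
      using norm_on_diff_le[OF Y LY[OF xs]] .
    also have "\<dots> \<le> (K1 + K2) * N (x - s n)" using K1 K2 xs by (simp add: distrib_right add_mono)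
    finally show ?thesis .
  qed
  then have "M (L1 x - L2 x) \<le> 0"
    using LIMSEQ_le_const[OF tendsto_mult_left[OF s(2), of "K1 + K2"]] by simp
  then show ?thesis using norm_onD(4,5)[OF Y norm_on_diff[OF Y LY[OF x]]] by simp
qed

text \<open>Functionals are bounded linear maps into the reals, so they are determined on dense sets.\<close>
lemma dual_set_bdd_lin_map:
  assumes X: "is_norm_on X N" and h: "h \<in> dual_set X N"
  shows "bdd_lin_map X N UNIV abs h"
proof -
  obtain K where K: "K \<ge> 0" "\<forall>x\<in>X. \<bar>h x\<bar> \<le> K * N x" using dual_set_bound[OF X h] by blast
  have "\<forall>x\<in>X. \<bar>h x\<bar> \<le> (K + 1) * N x"
    using K norm_onD(4)[OF X] by (auto simp: distrib_right intro: order_trans)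
  then show ?thesis using dual_set_lin[OF h] K(1) unfolding bdd_lin_map_def
    by (intro conjI exI[of _ "K + 1"]) auto
qed

lemma norm_on_real: "is_norm_on (UNIV :: real set) abs"
  unfolding is_norm_on_def by (auto simp: abs_mult abs_triangle_ineq)

lemma dual_set_dense_unique:
  assumes "is_norm_on X N" "dense_in X N D" "h1 \<in> dual_set X N" "h2 \<in> dual_set X N"
    "\<forall>d\<in>D. h1 d = h2 d" "x \<in> X"
  shows "h1 x = h2 x"
  using bdd_lin_map_dense_unique[OF assms(1) norm_on_real assms(2)
      dual_set_bdd_lin_map[OF assms(1,3)] dual_set_bdd_lin_map[OF assms(1,4)] assms(5,6)] .

text \<open>
  The extension at \<open>x\<close> is the limit
  of \<open>L (s n)\<close> for any sequence \<open>s n \<rightarrow> x\<close> in \<open>D\<close>; the limit exists by completeness and does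
  not depend on the chosen sequence.
\<close>
context
  fixes X :: "'a::real_vector set" and N and Y :: "'b::real_vector set" and M and D and L and K
  assumes X: "is_norm_on X N" and Yb: "banach_on Y M" and D: "dense_in X N D"
    and Dadd: "\<forall>x\<in>D. \<forall>y\<in>D. x + y \<in> D" and Dscale: "\<forall>x\<in>D. \<forall>c. c *\<^sub>R x \<in> D"
    and Llin: "lin_on D L" and LY: "\<forall>d\<in>D. L d \<in> Y" and LK: "\<forall>d\<in>D. M (L d) \<le> K * N d" and K0: "0 \<le> K"
begin

private lemma Y: "is_norm_on Y M" using Yb unfolding banach_on_def by auto

private lemma DX: "D \<subseteq> X" using D unfolding dense_in_def by auto

private lemma DN: "is_norm_on D N"
proof -
  obtain d where "d \<in> D" using D norm_onD(1)[OF X] unfolding dense_in_def by (metis zero_less_one)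
  thus ?thesis using norm_on_subspace[OF X DX _ Dadd Dscale] by auto
qed

private lemma images_close:
  assumes "x \<in> X" "a \<in> D" "b \<in> D"
  shows "M (L a - L b) \<le> K * (N (x - a) + N (x - b))"
proof -
  have aX: "a \<in> X" and bX: "b \<in> X" using assms DX by auto
  have "M (L a - L b) \<le> K * N (a - b)"
    using LK norm_on_diff[OF DN assms(2,3)] lin_on_diff[OF Llin DN assms(2,3)] by metis
  also have "N (a - b) \<le> N (x - a) + N (x - b)"
    using norm_on_triangle[OF X aX assms(1) bX] norm_on_commute[OF X aX assms(1)] by simp
  then have "K * N (a - b) \<le> K * (N (x - a) + N (x - b))" using K0 by (rule mult_left_mono)
  finally show ?thesis .
qed

private lemma image_limit_exists:
  assumes x: "x \<in> X" and s: "\<And>n. s n \<in> D" and lim: "(\<lambda>n. N (x - s n)) \<longlonglongrightarrow> 0"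
  shows "\<exists>y\<in>Y. (\<lambda>n. M (L (s n) - y)) \<longlonglongrightarrow> 0"
proof -
  have "\<exists>n0. \<forall>m\<ge>n0. \<forall>n\<ge>n0. M (L (s m) - L (s n)) < e" if e: "e > 0" for e
  proof -
    define e' where "e' = e / (2 * (K + 1))"
    have e': "e' > 0" using e K0 by (simp add: e'_def)
    obtain n0 where n0: "\<And>n. n \<ge> n0 \<Longrightarrow> N (x - s n) < e'"
      using order_tendstoD(2)[OF lim e'] unfolding eventually_sequentially by auto
    have "M (L (s m) - L (s n)) < e" if "m \<ge> n0" "n \<ge> n0" for m n
    proof -
      have "M (L (s m) - L (s n)) \<le> K * (N (x - s m) + N (x - s n))" using images_close[OF x s s] .
      also have "\<dots> \<le> K * (2 * e')" using n0[OF that(1)] n0[OF that(2)] K0 by (intro mult_left_mono) auto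
      also have "\<dots> < (K + 1) * (2 * e')" using e' by (simp add: distrib_right)
      also have "\<dots> = e" using K0 by (simp add: e'_def field_simps)
      finally show ?thesis .
    qed
    then show ?thesis by blast
  qed
  moreover have "\<forall>n. L (s n) \<in> Y" using LY s by auto
  moreover note Yb[unfolded banach_on_def, THEN conjunct2, rule_format, of "\<lambda>n. L (s n)"]
  ultimately show ?thesis by blast
qed

private lemma image_limit_independent:
  assumes x: "x \<in> X" and s: "\<And>n. s n \<in> D" "(\<lambda>n. N (x - s n)) \<longlonglongrightarrow> 0"
    and t: "\<And>n. t n \<in> D" "(\<lambda>n. N (x - t n)) \<longlonglongrightarrow> 0"
    and y: "y \<in> Y" "(\<lambda>n. M (L (s n) - y)) \<longlonglongrightarrow> 0"
  shows "(\<lambda>n. M (L (t n) - y)) \<longlonglongrightarrow> 0"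
proof (rule Lim_null_comparison[OF always_eventually], intro allI)
  fix n
  have "M (L (t n) - y) \<le> M (L (t n) - L (s n)) + M (L (s n) - y)"
    using norm_on_triangle[OF Y _ _ y(1)] LY s(1) t(1) by auto
  moreover have "M (L (t n) - L (s n)) \<le> K * (N (x - s n) + N (x - t n))"
    using images_close[OF x t(1) s(1)] by (simp add: add.commute)
  moreover have "0 \<le> M (L (t n) - y)" using norm_onD(4)[OF Y norm_on_diff[OF Y _ y(1)]] LY t(1) by auto
  ultimately show "norm (M (L (t n) - y)) \<le> K * (N (x - s n) + N (x - t n)) + M (L (s n) - y)" by simp
next
  show "(\<lambda>n. K * (N (x - s n) + N (x - t n)) + M (L (s n) - y)) \<longlonglongrightarrow> 0"
    using tendsto_add[OF tendsto_mult_left[OF tendsto_add[OF s(2) t(2)], of K] y(2)] by simp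
qed

private definition ext :: "'a \<Rightarrow> 'b" where
  "ext x = (SOME y. y \<in> Y \<and> (\<forall>s. (\<forall>n. s n \<in> D) \<and> (\<lambda>n. N (x - s n)) \<longlonglongrightarrow> 0
                                    \<longrightarrow> (\<lambda>n. M (L (s n) - y)) \<longlonglongrightarrow> 0))"

private lemma ext_mem: "x \<in> X \<Longrightarrow> ext x \<in> Y"
  and ext_limit: "x \<in> X \<Longrightarrow> (\<And>n. s n \<in> D) \<Longrightarrow> (\<lambda>n. N (x - s n)) \<longlonglongrightarrow> 0
                  \<Longrightarrow> (\<lambda>n. M (L (s n) - ext x)) \<longlonglongrightarrow> 0"
proof -
  assume x: "x \<in> X"
  obtain s0 where s0: "\<And>n. s0 n \<in> D" "(\<lambda>n. N (x - s0 n)) \<longlonglongrightarrow> 0" using dense_approx[OF D x X] by blast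
  obtain y where y: "y \<in> Y" "(\<lambda>n. M (L (s0 n) - y)) \<longlonglongrightarrow> 0" using image_limit_exists[OF x s0] by blast
  have "\<exists>y. y \<in> Y \<and> (\<forall>s. (\<forall>n. s n \<in> D) \<and> (\<lambda>n. N (x - s n)) \<longlonglongrightarrow> 0 \<longrightarrow> (\<lambda>n. M (L (s n) - y)) \<longlonglongrightarrow> 0)"
    using image_limit_independent[OF x s0 _ _ y] y(1) by blast
  from someI_ex[OF this, folded ext_def]
  show "ext x \<in> Y" "(\<And>n. s n \<in> D) \<Longrightarrow> (\<lambda>n. N (x - s n)) \<longlonglongrightarrow> 0 \<Longrightarrow> (\<lambda>n. M (L (s n) - ext x)) \<longlonglongrightarrow> 0"
    by blast+
qed

private lemma ext_agrees: "d \<in> D \<Longrightarrow> ext d = L d"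
  using norm_on_limit_unique[OF Y _ ext_mem, of "\<lambda>_. L d"] ext_limit[of d "\<lambda>_. d"] LY DX
    norm_on_zero[OF X] norm_on_zero[OF Y] by auto

private lemma ext_add:
  assumes x: "x \<in> X" and y: "y \<in> X"
  shows "ext (x + y) = ext x + ext y"
proof -
  obtain s where s: "\<And>n. s n \<in> D" "(\<lambda>n. N (x - s n)) \<longlonglongrightarrow> 0" using dense_approx[OF D x X] by blast
  obtain t where t: "\<And>n. t n \<in> D" "(\<lambda>n. N (y - t n)) \<longlonglongrightarrow> 0" using dense_approx[OF D y X] by blast
  have xy: "x + y \<in> X" using norm_onD(2)[OF X x y] .
  have st: "\<And>n. s n + t n \<in> D" using Dadd s(1) t(1) by auto
  have "(\<lambda>n. N ((x + y) - (s n + t n))) \<longlonglongrightarrow> 0"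
  proof (rule Lim_null_comparison[OF always_eventually tendsto_add_zero[OF s(2) t(2)]], intro allI)
    fix n
    have "s n \<in> X" "t n \<in> X" using s(1) t(1) DX by auto
    then show "norm (N ((x + y) - (s n + t n))) \<le> N (x - s n) + N (y - t n)"
      using norm_on_triangle_add[OF X x y] norm_onD(4)[OF X norm_on_diff[OF X xy norm_onD(2)[OF X]]] by simp
  qed
  then have c1: "(\<lambda>n. M (L (s n + t n) - ext (x + y))) \<longlonglongrightarrow> 0" using ext_limit[OF xy st] by simp
  have "(\<lambda>n. M (L (s n + t n) - (ext x + ext y))) \<longlonglongrightarrow> 0"
  proof (rule Lim_null_comparison[OF always_eventually
        tendsto_add_zero[OF ext_limit[OF x s] ext_limit[OF y t]]], intro allI)
    fix n
    have "L (s n + t n) = L (s n) + L (t n)" using lin_onD(1)[OF Llin s(1) t(1)] .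
    then show "norm (M (L (s n + t n) - (ext x + ext y))) \<le> M (L (s n) - ext x) + M (L (t n) - ext y)"
      using norm_on_triangle_add[OF Y, of "L (s n)" "L (t n)" "ext x" "ext y"]
        norm_onD(2,4)[OF Y] norm_on_diff[OF Y] s(1) t(1) LY ext_mem[OF x] ext_mem[OF y] by auto
  qed
  then show ?thesis
    using norm_on_limit_unique[OF Y _ _ _ c1] LY st ext_mem[OF xy] ext_mem[OF x] ext_mem[OF y]
      norm_onD(2)[OF Y] by auto
qed

private lemma ext_scale:
  assumes x: "x \<in> X"
  shows "ext (c *\<^sub>R x) = c *\<^sub>R ext x"
proof -
  obtain s where s: "\<And>n. s n \<in> D" "(\<lambda>n. N (x - s n)) \<longlonglongrightarrow> 0" using dense_approx[OF D x X] by blast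
  have cx: "c *\<^sub>R x \<in> X" using norm_onD(3)[OF X x] .
  have cs: "\<And>n. c *\<^sub>R s n \<in> D" using Dscale s(1) by auto
  have "N (c *\<^sub>R x - c *\<^sub>R s n) = \<bar>c\<bar> * N (x - s n)" for n
    using norm_onD(6)[OF X norm_on_diff[OF X x], of "s n" c] s(1) DX by (auto simp: scaleR_diff_right)
  then have "(\<lambda>n. N (c *\<^sub>R x - c *\<^sub>R s n)) \<longlonglongrightarrow> 0" using tendsto_mult_left[OF s(2), of "\<bar>c\<bar>"] by simp
  then have c1: "(\<lambda>n. M (L (c *\<^sub>R s n) - ext (c *\<^sub>R x))) \<longlonglongrightarrow> 0" using ext_limit[OF cx cs] by simp
  have "M (L (c *\<^sub>R s n) - c *\<^sub>R ext x) = \<bar>c\<bar> * M (L (s n) - ext x)" for n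
    using norm_onD(6)[OF Y norm_on_diff[OF Y], of "L (s n)" "ext x" c] lin_onD(2)[OF Llin s(1)]
      LY s(1) ext_mem[OF x] by (auto simp: scaleR_diff_right)
  then have c2: "(\<lambda>n. M (L (c *\<^sub>R s n) - c *\<^sub>R ext x)) \<longlonglongrightarrow> 0"
    using tendsto_mult_left[OF ext_limit[OF x s], of "\<bar>c\<bar>"] by simp
  show ?thesis
    using norm_on_limit_unique[OF Y _ _ _ c1 c2] LY cs ext_mem[OF cx] ext_mem[OF x] norm_onD(3)[OF Y] by auto
qed

private lemma ext_bound:
  assumes x: "x \<in> X"
  shows "M (ext x) \<le> K * N x"
proof -
  obtain s where s: "\<And>n. s n \<in> D" "(\<lambda>n. N (x - s n)) \<longlonglongrightarrow> 0" using dense_approx[OF D x X] by blast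
  have "M (ext x) - K * N x \<le> M (L (s n) - ext x) + K * N (x - s n)" for n
  proof -
    have sX: "s n \<in> X" using s(1) DX by auto
    have "M (ext x) \<le> M (L (s n) - ext x) + M (L (s n))"
      using norm_on_triangle[OF Y ext_mem[OF x] _ norm_onD(1)[OF Y], of "L (s n)"]
        norm_on_commute[OF Y ext_mem[OF x], of "L (s n)"] LY s(1) by simp
    moreover have "N (s n) \<le> N (x - s n) + N x"
      using norm_on_triangle[OF X sX x norm_onD(1)[OF X]] norm_on_commute[OF X sX x] by simp
    then have "K * N (s n) \<le> K * (N (x - s n) + N x)" using K0 by (rule mult_left_mono)
    moreover have "M (L (s n)) \<le> K * N (s n)" using LK s(1) by auto
    ultimately show ?thesis by (simp add: distrib_left)
  qed
  moreover have "(\<lambda>n. M (L (s n) - ext x) + K * N (x - s n)) \<longlonglongrightarrow> 0"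
    using tendsto_add[OF ext_limit[OF x s] tendsto_mult_left[OF s(2), of K]] by simp
  ultimately have "M (ext x) - K * N x \<le> 0" using LIMSEQ_le_const by blast
  then show ?thesis by simp
qed

lemma dense_extension:
  "\<exists>L'. lin_on X L' \<and> (\<forall>x\<in>X. L' x \<in> Y) \<and> (\<forall>x\<in>X. M (L' x) \<le> K * N x) \<and> (\<forall>d\<in>D. L' d = L d)"
  using ext_add ext_scale ext_mem ext_bound ext_agrees unfolding lin_on_def by blast

end

section \<open>Sequence spaces\<close>

lemma sum_fun_apply: "(\<Sum>i<(n::nat). (f i :: 'a \<Rightarrow> 'b::comm_monoid_add)) j = (\<Sum>i<n. f i j)"
  by (induction n) auto

lemma scaleR_fun_apply: "(a *\<^sub>R (f :: 'a \<Rightarrow> 'b::real_vector)) j = a *\<^sub>R f j"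
  by (simp add: scaleR_fun_def)

lemma section_apply: "(\<Sum>i<n. c i *\<^sub>R e_vec i) j = (if j < n then c j else 0)"
  by (induction n) (auto simp: sum_fun_apply scaleR_fun_apply e_vec_def less_Suc_eq)

lemma sum_e_vec: "(\<Sum>i<n. a i * e_vec j i) = (if j < n then a j else (0::real))"
  by (induction n) (auto simp: e_vec_def less_Suc_eq)

lemma BK_norm_on: "BK_space \<Theta> T \<Longrightarrow> is_norm_on \<Theta> T"
  unfolding BK_space_def banach_on_def by auto

lemma lambda_BK_BK: "lambda_BK \<Theta> T l \<Longrightarrow> BK_space \<Theta> T"
  and lambda_BK_e_vec: "lambda_BK \<Theta> T l \<Longrightarrow> e_vec i \<in> \<Theta>"
  unfolding lambda_BK_def by auto

lemma CB_BK: "CB_space \<Theta> T \<Longrightarrow> BK_space \<Theta> T"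
  and CB_e_vec: "CB_space \<Theta> T \<Longrightarrow> e_vec i \<in> \<Theta>"
  and CB_sections: "CB_space \<Theta> T \<Longrightarrow> c \<in> \<Theta> \<Longrightarrow> (\<lambda>n. T (c - (\<Sum>i<n. c i *\<^sub>R e_vec i))) \<longlonglongrightarrow> 0"
  unfolding CB_space_def by auto

lemma coord_dual:
  assumes "BK_space \<Theta> T"
  shows "(\<lambda>c. c j) \<in> dual_set \<Theta> T"
proof -
  obtain C where "\<forall>c\<in>\<Theta>. \<bar>c j\<bar> \<le> C * T c" using assms unfolding BK_space_def by auto
  moreover have "lin_on \<Theta> (\<lambda>c. c j)" unfolding lin_on_def by (simp add: scaleR_fun_apply)
  ultimately show ?thesis by (intro dual_setI) auto
qed

lemma section_mem:
  assumes "is_norm_on \<Theta> T" "\<And>i. e_vec i \<in> \<Theta>"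
  shows "(\<Sum>i<n. c i *\<^sub>R e_vec i) \<in> \<Theta>"
  using norm_on_lincomb[OF assms(1)] assms(2) by auto

lemma dual_section:
  assumes "is_norm_on \<Theta> T" "\<And>i. e_vec i \<in> \<Theta>" "G \<in> dual_set \<Theta> T"
  shows "G (\<Sum>i<n. c i *\<^sub>R e_vec i) = (\<Sum>i<n. G (e_vec i) * c i)"
  using lin_on_lincomb[OF dual_set_lin[OF assms(3)] assms(1), of n e_vec c] assms(2)
  by (simp add: mult.commute)

lemma CB_dual_unique:
  assumes CB: "CB_space \<Theta> T" and G: "G \<in> dual_set \<Theta> T" and H: "H \<in> dual_set \<Theta> T"
    and eq: "\<forall>i. G (e_vec i) = H (e_vec i)" and c: "c \<in> \<Theta>"
  shows "G c = H c"
proof -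
  have Th: "is_norm_on \<Theta> T" using BK_norm_on[OF CB_BK[OF CB]] .
  have e: "\<And>i. e_vec i \<in> \<Theta>" using CB_e_vec[OF CB] .
  let ?P = "\<lambda>n. (\<Sum>i<n. c i *\<^sub>R e_vec i)"
  have "\<bar>G c - H c\<bar> \<le> (fnorm \<Theta> T G + fnorm \<Theta> T H) * T (c - ?P n)" for n
  proof -
    have P: "?P n \<in> \<Theta>" using section_mem[OF Th e] .
    have cP: "c - ?P n \<in> \<Theta>" using norm_on_diff[OF Th c P] .
    have "G (?P n) = H (?P n)" using dual_section[OF Th e G] dual_section[OF Th e H] eq by simp
    then have "G c - H c = G (c - ?P n) - H (c - ?P n)"
      using lin_on_diff[OF dual_set_lin[OF G] Th c P] lin_on_diff[OF dual_set_lin[OF H] Th c P] by simp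
    then show ?thesis
      using dual_fnorm_bound[OF Th G cP] dual_fnorm_bound[OF Th H cP] by (simp add: distrib_right)
  qed
  then have "\<bar>G c - H c\<bar> \<le> 0"
    using LIMSEQ_le_const[OF tendsto_mult_left[OF CB_sections[OF CB c],
          of "fnorm \<Theta> T G + fnorm \<Theta> T H"], of "\<bar>G c - H c\<bar>"] by auto
  thus ?thesis by simp
qed

lemma CB_seq_dual_repr:
  assumes CB: "CB_space \<Theta> T" and G: "G \<in> dual_set \<Theta> T" and d: "\<forall>i. d i = G (e_vec i)"
  defines "S \<equiv> SOME G'. G' \<in> dual_set \<Theta> T \<and> (\<forall>i. d i = G' (e_vec i))"
  shows "S \<in> dual_set \<Theta> T" "\<forall>z\<in>\<Theta>. S z = G z"
proof -
  have "S \<in> dual_set \<Theta> T \<and> (\<forall>i. d i = S (e_vec i))"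
    unfolding S_def by (rule someI[of _ G]) (use G d in blast)
  then show "S \<in> dual_set \<Theta> T" "\<forall>z\<in>\<Theta>. S z = G z"
    using CB_dual_unique[OF CB _ G] d by metis+
qed

lemma CB_seq_dual_norm:
  assumes "CB_space \<Theta> T" "G \<in> dual_set \<Theta> T" "\<forall>i. d i = G (e_vec i)"
  shows "seq_dual_norm \<Theta> T d = fnorm \<Theta> T G"
  unfolding seq_dual_norm_def using CB_seq_dual_repr[OF assms] by (simp add: fnorm_cong)

section \<open>Shrinking bases\<close>

text \<open>
  This is exactly what the expansion of
  functionals in \<open>X\<^sub>s\<^sup>*\<close> needs.
\<close>
definition shrinking_on :: "(nat \<Rightarrow> real) set \<Rightarrow> ((nat \<Rightarrow> real) \<Rightarrow> real) \<Rightarrow> bool" where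
  "shrinking_on \<Theta> T \<longleftrightarrow> (\<forall>H\<in>dual_set \<Theta> T.
     (\<lambda>n. fnorm \<Theta> T (\<lambda>c. H c - (\<Sum>i<n. H (e_vec i) * c i))) \<longlonglongrightarrow> 0)"

text \<open>In a \<open>\<lambda>\<close>-\<open>BK\<close>-space the sections are uniformly bounded, hence so are the tails.\<close>
lemma lambda_BK_tail_bound:
  assumes lBK: "lambda_BK \<Theta> T l" and c: "c \<in> \<Theta>"
  shows "T (c - (\<Sum>i<n. c i *\<^sub>R e_vec i)) \<le> (1 + \<bar>l\<bar>) * T c"
proof -
  have Th: "is_norm_on \<Theta> T" using BK_norm_on[OF lambda_BK_BK[OF lBK]] .
  have P: "(\<Sum>i<n. c i *\<^sub>R e_vec i) \<in> \<Theta>" using section_mem[OF Th lambda_BK_e_vec[OF lBK]] .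
  have "T (\<Sum>i<n. c i *\<^sub>R e_vec i) \<le> l * T c" using lBK c unfolding lambda_BK_def by auto
  also have "\<dots> \<le> \<bar>l\<bar> * T c" using norm_onD(4)[OF Th c] by (intro mult_right_mono) auto
  finally show ?thesis using norm_on_diff_le[OF Th c P] by (simp add: distrib_right)
qed

lemma tail_functional_eq:
  assumes "lambda_BK \<Theta> T l" "H \<in> dual_set \<Theta> T" "c \<in> \<Theta>"
  shows "H c - (\<Sum>i<n. H (e_vec i) * c i) = H (c - (\<Sum>i<n. c i *\<^sub>R e_vec i))"
proof -
  have Th: "is_norm_on \<Theta> T" using BK_norm_on[OF lambda_BK_BK[OF assms(1)]] .
  have e: "\<And>i. e_vec i \<in> \<Theta>" using lambda_BK_e_vec[OF assms(1)] .
  show ?thesis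
    using lin_on_diff[OF dual_set_lin[OF assms(2)] Th assms(3) section_mem[OF Th e]]
      dual_section[OF Th e assms(2)] by simp
qed

lemma tail_functional_bound:
  assumes lBK: "lambda_BK \<Theta> T l" and H: "H \<in> dual_set \<Theta> T" and c: "c \<in> \<Theta>"
  shows "\<bar>H c - (\<Sum>i<n. H (e_vec i) * c i)\<bar> \<le> (fnorm \<Theta> T H * (1 + \<bar>l\<bar>)) * T c"
proof -
  have Th: "is_norm_on \<Theta> T" using BK_norm_on[OF lambda_BK_BK[OF lBK]] .
  have "c - (\<Sum>i<n. c i *\<^sub>R e_vec i) \<in> \<Theta>"
    using norm_on_diff[OF Th c section_mem[OF Th lambda_BK_e_vec[OF lBK]]] .
  then have "\<bar>H c - (\<Sum>i<n. H (e_vec i) * c i)\<bar> \<le> fnorm \<Theta> T H * T (c - (\<Sum>i<n. c i *\<^sub>R e_vec i))"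
    unfolding tail_functional_eq[OF lBK H c] by (rule dual_fnorm_bound[OF Th H])
  also have "\<dots> \<le> fnorm \<Theta> T H * ((1 + \<bar>l\<bar>) * T c)"
    using lambda_BK_tail_bound[OF lBK c] dual_fnorm_nonneg[OF Th H] by (rule mult_left_mono)
  finally show ?thesis by (simp add: mult.assoc)
qed

lemma tail_functional_dual:
  assumes lBK: "lambda_BK \<Theta> T l" and H: "H \<in> dual_set \<Theta> T"
  shows "(\<lambda>c. H c - (\<Sum>i<n. H (e_vec i) * c i)) \<in> dual_set \<Theta> T"
proof (rule dual_setI)
  show "lin_on \<Theta> (\<lambda>c. H c - (\<Sum>i<n. H (e_vec i) * c i))"
    using dual_set_lin[OF H] unfolding lin_on_def
    by (simp add: scaleR_fun_apply sum.distrib distrib_left sum_distrib_left mult.left_commute right_diff_distrib)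
  show "\<forall>c\<in>\<Theta>. \<bar>H c - (\<Sum>i<n. H (e_vec i) * c i)\<bar> \<le> (fnorm \<Theta> T H * (1 + \<bar>l\<bar>)) * T c"
    using tail_functional_bound[OF lBK H] by blast
qed

text \<open>If \<open>\<Theta>\<^sup>*\<close> is itself a \<open>CB\<close>-space, the tails of \<open>(H e\<^sub>i)\<close> in \<open>\<Theta>\<^sup>*\<close> are the tail functionals.\<close>
lemma CB_dual_shrinking:
  assumes CB: "CB_space \<Theta> T" and lBK: "lambda_BK \<Theta> T l"
    and CBd: "CB_space (seq_dual \<Theta> T) (seq_dual_norm \<Theta> T)"
  shows "shrinking_on \<Theta> T"
  unfolding shrinking_on_def
proof
  fix H assume H: "H \<in> dual_set \<Theta> T"
  let ?d = "\<lambda>i. H (e_vec i)"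
  have "?d \<in> seq_dual \<Theta> T" unfolding seq_dual_def using H by auto
  then have "(\<lambda>n. seq_dual_norm \<Theta> T (?d - (\<Sum>i<n. ?d i *\<^sub>R e_vec i))) \<longlonglongrightarrow> 0"
    by (rule CB_sections[OF CBd])
  moreover have "seq_dual_norm \<Theta> T (?d - (\<Sum>i<n. ?d i *\<^sub>R e_vec i))
           = fnorm \<Theta> T (\<lambda>c. H c - (\<Sum>i<n. H (e_vec i) * c i))" for n
    by (rule CB_seq_dual_norm[OF CB tail_functional_dual[OF lBK H]])
       (simp add: section_apply sum_e_vec)
  ultimately show "(\<lambda>n. fnorm \<Theta> T (\<lambda>c. H c - (\<Sum>i<n. H (e_vec i) * c i))) \<longlonglongrightarrow> 0" by simp
qed

section \<open>Reflexive \<open>\<lambda>\<close>-\<open>BK\<close>-spaces have shrinking bases\<close>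

text \<open>
  Tychonoff: a uniformly bounded family of real sequences \<open>a k\<close>, indexed by an arbitrary set,
  has a cluster point \<open>\<phi>\<close> for pointwise convergence, i.e. every basic neighbourhood of \<open>\<phi>\<close>
  (finitely many indices) is visited by \<open>a k\<close> for arbitrarily large \<open>k\<close>.
\<close>
lemma bounded_family_cluster_point:
  fixes a :: "nat \<Rightarrow> 'i \<Rightarrow> real" and b :: "'i \<Rightarrow> real"
  assumes bound: "\<And>k i. \<bar>a k i\<bar> \<le> b i"
  obtains \<phi> where "\<And>i. \<bar>\<phi> i\<bar> \<le> b i"
    and "\<And>I e m. finite I \<Longrightarrow> e > 0 \<Longrightarrow> \<exists>k\<ge>m. \<forall>i\<in>I. \<bar>a k i - \<phi> i\<bar> < e"
proof -
  define box where "box = (\<Pi>\<^sub>E i\<in>UNIV. {-b i..b i})"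
  have "compactin (product_topology (\<lambda>_. euclidean) UNIV) box"
    unfolding box_def compactin_PiE by simp
  then have "compact box" by (simp add: euclidean_product_topology)
  moreover have "filtermap a sequentially \<noteq> bot" by (simp add: filtermap_bot_iff)
  moreover have "eventually (\<lambda>\<psi>. \<psi> \<in> box) (filtermap a sequentially)"
    using bound by (auto simp: box_def eventually_filtermap abs_le_iff minus_le_iff intro!: always_eventually)
  ultimately obtain \<phi> where \<phi>: "\<phi> \<in> box" "inf (nhds \<phi>) (filtermap a sequentially) \<noteq> bot"
    unfolding compact_filter by blast
  show ?thesis
  proof (rule that)
    show "\<bar>\<phi> i\<bar> \<le> b i" for i using \<phi>(1) by (auto simp: box_def abs_le_iff minus_le_iff)
    fix I :: "'i set" and e :: real and m :: nat
    assume I: "finite I" and e: "e > 0"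
    have "open {\<psi>. \<forall>i\<in>I. \<psi> (id i) \<in> ball (\<phi> i) e}"
      by (rule product_topology_basis') (use I in auto)
    then have "eventually (\<lambda>\<psi>. \<forall>i\<in>I. \<psi> i \<in> ball (\<phi> i) e) (nhds \<phi>)"
      using eventually_nhds_in_open e by fastforce
    moreover have "eventually (\<lambda>\<psi>. \<exists>k\<ge>m. \<psi> = a k) (filtermap a sequentially)"
      unfolding eventually_filtermap eventually_sequentially by blast
    ultimately have "\<not> (\<forall>\<psi>. (\<forall>i\<in>I. \<psi> i \<in> ball (\<phi> i) e) \<longrightarrow> (\<exists>k\<ge>m. \<psi> = a k) \<longrightarrow> False)"
      using \<phi>(2) unfolding trivial_limit_def eventually_inf by blast
    then show "\<exists>k\<ge>m. \<forall>i\<in>I. \<bar>a k i - \<phi> i\<bar> < e"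
      by (auto simp: dist_real_def abs_minus_commute)
  qed
qed

lemma real_eq_if_close:
  assumes "\<And>e. e > 0 \<Longrightarrow> \<bar>x - y\<bar> < e"
  shows "(x::real) = y"
  using assms[of "\<bar>x - y\<bar>"] by (cases "x = y") auto

text \<open>
  A pointwise cluster point \<open>\<phi>\<close> of the evaluation maps \<open>G \<mapsto> G (u k)\<close> on \<open>X\<^sup>*\<close> is linear,
  since linear relations between finitely many functionals pass to the cluster point.
\<close>
lemma cluster_of_evaluations_linear:
  fixes a :: "nat \<Rightarrow> ('a::real_vector \<Rightarrow> real) \<Rightarrow> real" and u :: "nat \<Rightarrow> 'a"
  assumes X: "is_norm_on X N" and eval: "\<And>k G. G \<in> dual_set X N \<Longrightarrow> a k G = G (u k)"
    and cluster: "\<And>I e m. finite I \<Longrightarrow> e > 0 \<Longrightarrow> \<exists>k\<ge>m. \<forall>G\<in>I. \<bar>a k G - \<phi> G\<bar> < e"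
  shows "\<And>G1 G2. G1 \<in> dual_set X N \<Longrightarrow> G2 \<in> dual_set X N \<Longrightarrow> \<phi> (\<lambda>z. G1 z + G2 z) = \<phi> G1 + \<phi> G2"
    and "\<And>G c. G \<in> dual_set X N \<Longrightarrow> \<phi> (\<lambda>z. c * G z) = c * \<phi> G"
proof -
  show "\<phi> (\<lambda>z. G1 z + G2 z) = \<phi> G1 + \<phi> G2"
    if G1: "G1 \<in> dual_set X N" and G2: "G2 \<in> dual_set X N" for G1 G2
  proof (rule real_eq_if_close)
    fix e :: real assume e: "e > 0"
    let ?G = "\<lambda>z. G1 z + G2 z"
    obtain k where k: "\<forall>G\<in>{G1, G2, ?G}. \<bar>a k G - \<phi> G\<bar> < e / 3"
      using cluster[of "{G1, G2, ?G}" "e / 3" 0] e by auto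
    then have "\<bar>G1 (u k) - \<phi> G1\<bar> < e / 3" "\<bar>G2 (u k) - \<phi> G2\<bar> < e / 3"
      "\<bar>G1 (u k) + G2 (u k) - \<phi> ?G\<bar> < e / 3"
      using G1 G2 dual_set_add[OF X G1 G2] by (auto simp: eval)
    then show "\<bar>\<phi> ?G - (\<phi> G1 + \<phi> G2)\<bar> < e" unfolding abs_less_iff by linarith
  qed
  show "\<phi> (\<lambda>z. c * G z) = c * \<phi> G" if G: "G \<in> dual_set X N" for c G
  proof (rule real_eq_if_close)
    fix e :: real assume e: "e > 0"
    let ?cG = "\<lambda>z. c * G z"
    define p where "p = 1 + \<bar>c\<bar>"
    define d where "d = e / (2 * p)"
    have pos: "p > 0" by (simp add: p_def add_pos_nonneg)
    have d: "d > 0" "d + \<bar>c\<bar> * d = e / 2"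
    proof -
      show "d > 0" using e pos by (simp add: d_def)
      have "d + \<bar>c\<bar> * d = d * p" by (simp add: p_def algebra_simps)
      also have "\<dots> = e / 2" using pos by (simp add: d_def)
      finally show "d + \<bar>c\<bar> * d = e / 2" .
    qed
    obtain k where k: "\<forall>F\<in>{G, ?cG}. \<bar>a k F - \<phi> F\<bar> < d"
      using cluster[of "{G, ?cG}" d 0] d(1) by auto
    have k1: "\<bar>c * G (u k) - \<phi> ?cG\<bar> < d" using k dual_set_scale[OF X G, of c] by (simp add: eval)
    have "\<bar>G (u k) - \<phi> G\<bar> < d" using k G by (simp add: eval)
    then have "\<bar>c\<bar> * \<bar>G (u k) - \<phi> G\<bar> \<le> \<bar>c\<bar> * d" by (intro mult_left_mono) auto
    then have k2: "\<bar>c * G (u k) - c * \<phi> G\<bar> \<le> \<bar>c\<bar> * d" by (simp add: abs_mult right_diff_distrib[symmetric])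
    show "\<bar>\<phi> ?cG - c * \<phi> G\<bar> < e" using k1 k2 d(2) e unfolding abs_le_iff abs_less_iff by linarith
  qed
qed

text \<open>
  Weak compactness in a reflexive \<open>BK\<close>-space: a bounded block sequence (\<open>u k\<close> vanishes on the
  first \<open>k\<close> coordinates) has \<open>0\<close> as a weak cluster point, so no functional stays away from \<open>0\<close>
  along it.  The cluster point of the values \<open>G (u k)\<close>, \<open>G \<in> \<Theta>\<^sup>*\<close>, is a bounded linear functional
  on \<open>\<Theta>\<^sup>*\<close>, by reflexivity the evaluation at some \<open>x \<in> \<Theta>\<close>, and all coordinates of \<open>x\<close> vanish.
\<close>
lemma reflexive_block_sequence_weak_null:
  assumes BK: "BK_space \<Theta> T" and refl: "reflexive_on \<Theta> T"
    and u: "\<And>k. u k \<in> \<Theta>" "\<And>k. T (u k) \<le> C" "\<And>k i. i < k \<Longrightarrow> u k i = 0"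
    and H: "H \<in> dual_set \<Theta> T" and r: "r > 0"
  shows "\<exists>k. \<bar>H (u k)\<bar> < r"
proof -
  have Th: "is_norm_on \<Theta> T" using BK_norm_on[OF BK] .
  define a where "a k G = (if G \<in> dual_set \<Theta> T then G (u k) else 0)" for k G
  define b where "b G = (if G \<in> dual_set \<Theta> T then fnorm \<Theta> T G * C else 0)" for G
  have bound: "\<bar>a k G\<bar> \<le> b G" for k G
  proof (cases "G \<in> dual_set \<Theta> T")
    case True
    have "\<bar>G (u k)\<bar> \<le> fnorm \<Theta> T G * T (u k)" by (rule dual_fnorm_bound[OF Th True u(1)])
    also have "\<dots> \<le> fnorm \<Theta> T G * C" by (rule mult_left_mono[OF u(2) dual_fnorm_nonneg[OF Th True]])
    finally show ?thesis using True by (simp add: a_def b_def)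
  qed (simp add: a_def b_def)
  then obtain \<phi> where \<phi>_bound: "\<And>G. \<bar>\<phi> G\<bar> \<le> b G"
    and cluster: "\<And>I e m. finite I \<Longrightarrow> e > 0 \<Longrightarrow> \<exists>k\<ge>m. \<forall>G\<in>I. \<bar>a k G - \<phi> G\<bar> < e"
    using bounded_family_cluster_point[of a b, OF bound] by blast
  have eval: "a k G = G (u k)" if "G \<in> dual_set \<Theta> T" for k G using that by (simp add: a_def)
  note \<phi>_linear = cluster_of_evaluations_linear[OF Th eval cluster]
  have "\<forall>h\<in>dual_set \<Theta> T. \<bar>\<phi> h\<bar> \<le> C * fnorm \<Theta> T h"
  proof
    fix h assume "h \<in> dual_set \<Theta> T"
    then show "\<bar>\<phi> h\<bar> \<le> C * fnorm \<Theta> T h" using \<phi>_bound[of h] by (simp add: b_def mult.commute)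
  qed
  then obtain x where x: "x \<in> \<Theta>" "\<forall>h\<in>dual_set \<Theta> T. \<phi> h = h x"
    using refl \<phi>_linear unfolding reflexive_on_def by blast
  have "x j = 0" for j
  proof -
    have coord: "(\<lambda>c. c j) \<in> dual_set \<Theta> T" by (rule coord_dual[OF BK])
    have "\<phi> (\<lambda>c. c j) = 0"
    proof (rule real_eq_if_close)
      fix e :: real assume "e > 0"
      then obtain k where "k \<ge> Suc j" "\<bar>a k (\<lambda>c. c j) - \<phi> (\<lambda>c. c j)\<bar> < e"
        using cluster[of "{\<lambda>c. c j}" e "Suc j"] by auto
      then show "\<bar>\<phi> (\<lambda>c. c j) - 0\<bar> < e" using u(3)[of j k] coord by (simp add: a_def)
    qed
    then show ?thesis using x(2) coord by simp
  qed
  then have "x = 0" by (simp add: fun_eq_iff)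
  then have "\<phi> H = 0" using x(2) H lin_on_zero[OF dual_set_lin[OF H] norm_onD(1)[OF Th]] by simp
  then show ?thesis using cluster[of "{H}" r 0] r H by (auto simp: a_def)
qed

text \<open>
  If the tail functionals of \<open>H\<close> do not tend to \<open>0\<close>, normalising witnesses of their norms gives
  a bounded block sequence on which \<open>H\<close> stays above a positive level.
\<close>
lemma tails_not_null_block_sequence:
  assumes lBK: "lambda_BK \<Theta> T l" and H: "H \<in> dual_set \<Theta> T"
    and not_null: "\<not> (\<lambda>n. fnorm \<Theta> T (\<lambda>c. H c - (\<Sum>i<n. H (e_vec i) * c i))) \<longlonglongrightarrow> 0"
  obtains r u where "r > 0" "\<And>k. u k \<in> \<Theta>" "\<And>k. T (u k) \<le> 1 + \<bar>l\<bar>"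
    "\<And>k i. i < k \<Longrightarrow> u k i = 0" "\<And>k. r < H (u k)"
proof -
  have Th: "is_norm_on \<Theta> T" using BK_norm_on[OF lambda_BK_BK[OF lBK]] .
  have e: "\<And>i. e_vec i \<in> \<Theta>" using lambda_BK_e_vec[OF lBK] .
  let ?C = "1 + \<bar>l\<bar>" and ?P = "\<lambda>n c. (\<Sum>i<n. c i *\<^sub>R e_vec i)"
  let ?D = "\<lambda>n c. H c - (\<Sum>i<n. H (e_vec i) * c i)"
  have D_nonneg: "0 \<le> fnorm \<Theta> T (?D n)" for n
    using dual_fnorm_nonneg[OF Th tail_functional_dual[OF lBK H]] .
  obtain r where r: "r > 0" and "\<forall>m. \<exists>n\<ge>m. \<not> \<bar>fnorm \<Theta> T (?D n) - 0\<bar> < r"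
    using not_null unfolding LIMSEQ_iff by auto
  then have big: "\<And>m. \<exists>n\<ge>m. r \<le> fnorm \<Theta> T (?D n)" using D_nonneg by force
  have "\<forall>k. \<exists>v. v \<in> \<Theta> \<and> T v \<le> ?C \<and> (\<forall>i<k. v i = 0) \<and> r / 2 < H v"
  proof
    fix k
    obtain n where n: "n \<ge> k" "r \<le> fnorm \<Theta> T (?D n)" using big by blast
    obtain c where c: "c \<in> \<Theta>" "r / 2 * T c < \<bar>?D n c\<bar>"
      using fnorm_witness[of "r / 2" \<Theta> T "?D n"] n(2) r by auto
    have Tc: "T c > 0"
      using c tail_functional_bound[OF lBK H c(1), of n] norm_onD(4)[OF Th c(1)]
      by (cases "T c = 0") auto
    define w where "w = c - ?P n c"
    have w: "w \<in> \<Theta>" "T w \<le> ?C * T c" "?D n c = H w"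
      unfolding w_def using norm_on_diff[OF Th c(1) section_mem[OF Th e]]
        lambda_BK_tail_bound[OF lBK c(1)] tail_functional_eq[OF lBK H c(1)] by auto
    define v where "v = (sgn (H w) / T c) *\<^sub>R w"
    have "H v = \<bar>H w\<bar> / T c"
      unfolding v_def using lin_onD(2)[OF dual_set_lin[OF H] w(1)] by (simp add: abs_sgn mult.commute)
    then have "r / 2 < H v" using c(2) Tc w(3) by (simp add: pos_less_divide_eq)
    moreover have "T v \<le> ?C"
    proof -
      have "T v = \<bar>sgn (H w)\<bar> / T c * T w" unfolding v_def using norm_onD(6)[OF Th w(1)] Tc by simp
      also have "\<dots> \<le> T w / T c"
        using norm_onD(4)[OF Th w(1)] Tc by (auto simp: abs_sgn_eq divide_right_mono)
      also have "\<dots> \<le> ?C" using w(2) Tc by (simp add: divide_le_eq)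
      finally show ?thesis .
    qed
    moreover have "\<forall>i<k. v i = 0" using n(1) by (simp add: v_def w_def scaleR_fun_apply section_apply)
    ultimately show "\<exists>v. v \<in> \<Theta> \<and> T v \<le> ?C \<and> (\<forall>i<k. v i = 0) \<and> r / 2 < H v"
      using norm_onD(3)[OF Th w(1)] unfolding v_def by blast
  qed
  then obtain u where "\<forall>k. u k \<in> \<Theta> \<and> T (u k) \<le> ?C \<and> (\<forall>i<k. u k i = 0) \<and> r / 2 < H (u k)"
    by (rule choice[THEN exE])
  then show ?thesis using r by (intro that[of "r / 2" u]) auto
qed

lemma reflexive_shrinking:
  assumes lBK: "lambda_BK \<Theta> T l" and refl: "reflexive_on \<Theta> T"
  shows "shrinking_on \<Theta> T"
  unfolding shrinking_on_def
proof (rule ballI, rule ccontr)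
  fix H assume H: "H \<in> dual_set \<Theta> T"
    and not_null: "\<not> (\<lambda>n. fnorm \<Theta> T (\<lambda>c. H c - (\<Sum>i<n. H (e_vec i) * c i))) \<longlonglongrightarrow> 0"
  obtain r u where r: "r > 0" and u: "\<And>k. u k \<in> \<Theta>" "\<And>k. T (u k) \<le> 1 + \<bar>l\<bar>"
      "\<And>k i. i < k \<Longrightarrow> u k i = 0" and above: "\<And>k. r < H (u k)"
    using tails_not_null_block_sequence[OF lBK H not_null] by blast
  obtain k where "\<bar>H (u k)\<bar> < r"
    using reflexive_block_sequence_weak_null[OF lambda_BK_BK[OF lBK] refl, of u, OF u H r] by blast
  with above[of k] show False by simp
qed

section \<open>The \<open>F\<close>-frame setting\<close>

definition F_synthesis :: "(nat \<Rightarrow> 'a::real_vector set) \<Rightarrow> (nat \<Rightarrow> 'a \<Rightarrow> real)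
     \<Rightarrow> (nat \<Rightarrow> (nat \<Rightarrow> real) set) \<Rightarrow> (nat \<Rightarrow> (nat \<Rightarrow> real) \<Rightarrow> real) \<Rightarrow> (nat \<Rightarrow> 'a \<Rightarrow> real)
     \<Rightarrow> ((nat \<Rightarrow> real) \<Rightarrow> 'a) \<Rightarrow> bool" where
  "F_synthesis X N \<Theta> T g V \<longleftrightarrow> (\<forall>c\<in>(\<Inter>r. \<Theta> r). V c \<in> (\<Inter>r. X r))
     \<and> (\<forall>c\<in>(\<Inter>r. \<Theta> r). \<forall>d\<in>(\<Inter>r. \<Theta> r). V (c + d) = V c + V d)
     \<and> (\<forall>c\<in>(\<Inter>r. \<Theta> r). \<forall>a. V (a *\<^sub>R c) = a *\<^sub>R V c)
     \<and> (\<forall>s. \<exists>K. \<forall>c\<in>(\<Inter>r. \<Theta> r). N s (V c) \<le> K * T s c)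
     \<and> (\<forall>f\<in>(\<Inter>r. X r). V (\<lambda>i. g i f) = f)"

lemma F_frame_iff: "F_frame X N \<Theta> T g \<longleftrightarrow> pre_F_frame X N \<Theta> T g \<and> (\<exists>V. F_synthesis X N \<Theta> T g V)"
  unfolding F_frame_def F_synthesis_def by blast

lemma F_seq_level:
  assumes "F_seq X N"
  shows "banach_on (X s) (N s)" "is_norm_on (X s) (N s)" "dense_in (X s) (N s) (\<Inter>r. X r)"
    and "\<forall>x\<in>(\<Inter>r. X r). \<forall>y\<in>(\<Inter>r. X r). x + y \<in> (\<Inter>r. X r)"
    and "\<forall>x\<in>(\<Inter>r. X r). \<forall>c. c *\<^sub>R x \<in> (\<Inter>r. X r)"
    and "is_norm_on (\<Inter>r. X r) (N s)"
proof -
  have banach: "banach_on (X r) (N r)" for r using assms unfolding F_seq_def separable_banach_def by auto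
  then have norm: "is_norm_on (X r) (N r)" for r unfolding banach_on_def by auto
  show "banach_on (X s) (N s)" "is_norm_on (X s) (N s)" using banach norm by auto
  show "dense_in (X s) (N s) (\<Inter>r. X r)" using assms unfolding F_seq_def by auto
  show add: "\<forall>x\<in>(\<Inter>r. X r). \<forall>y\<in>(\<Inter>r. X r). x + y \<in> (\<Inter>r. X r)" using norm_onD(2)[OF norm] by blast
  show scale: "\<forall>x\<in>(\<Inter>r. X r). \<forall>c. c *\<^sub>R x \<in> (\<Inter>r. X r)" using norm_onD(3)[OF norm] by blast
  have "(\<Inter>r. X r) \<noteq> {}" using assms unfolding F_seq_def by blast
  then show "is_norm_on (\<Inter>r. X r) (N s)" using norm_on_subspace[OF norm _ _ add scale] by blast
qed

lemma dual_frame_bessel: "dual_frame X N \<Theta> T f \<Longrightarrow> dual_bessel X N \<Theta> T f"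
  unfolding dual_frame_def dual_bessel_def by blast

text \<open>
  Throughout, \<open>g\<close> is an \<open>F\<close>-frame with synthesis operator \<open>V\<close>; \<open>ana s\<close> and \<open>syn s\<close> denote the
  continuous extensions of the analysis operator \<open>x \<mapsto> (g\<^sub>i x)\<^sub>i\<close> and of \<open>V\<close> to level \<open>s\<close>.
\<close>
locale F_frame_setting =
  fixes X :: "nat \<Rightarrow> 'a::real_vector set" and N :: "nat \<Rightarrow> 'a \<Rightarrow> real"
    and \<Theta> :: "nat \<Rightarrow> (nat \<Rightarrow> real) set" and T :: "nat \<Rightarrow> (nat \<Rightarrow> real) \<Rightarrow> real"
    and g :: "nat \<Rightarrow> 'a \<Rightarrow> real" and V :: "(nat \<Rightarrow> real) \<Rightarrow> 'a"
  assumes spaces: "F_seq X N" and seq_spaces: "F_seq \<Theta> T"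
    and lambda_BK: "\<forall>s. \<exists>l. lambda_BK (\<Theta> s) (T s) l"
    and pre_frame: "pre_F_frame X N \<Theta> T g" and synthesis: "F_synthesis X N \<Theta> T g V"
begin

abbreviation X\<^sub>F :: "'a set" where "X\<^sub>F \<equiv> \<Inter>r. X r"
abbreviation \<Theta>\<^sub>F :: "(nat \<Rightarrow> real) set" where "\<Theta>\<^sub>F \<equiv> \<Inter>r. \<Theta> r"

lemmas X_level = F_seq_level[OF spaces]
lemmas \<Theta>_level = F_seq_level[OF seq_spaces]

lemma e_vec_mem: "e_vec i \<in> \<Theta> s"
  using lambda_BK lambda_BK_e_vec by blast

lemma BK_level: "BK_space (\<Theta> s) (T s)"
  using lambda_BK lambda_BK_BK by blast

lemma coeffs_mem: "x \<in> X\<^sub>F \<Longrightarrow> (\<lambda>i. g i x) \<in> \<Theta>\<^sub>F"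
  using pre_frame unfolding pre_F_frame_def by blast

lemma analysis_lin: "lin_on X\<^sub>F (\<lambda>x i. g i x)"
proof -
  have "g i \<in> frechet_dual X N" for i using pre_frame unfolding pre_F_frame_def by blast
  then show ?thesis unfolding frechet_dual_def lin_on_def by (simp add: fun_eq_iff scaleR_fun_apply)
qed

lemma synthesis_facts:
  "\<And>c. c \<in> \<Theta>\<^sub>F \<Longrightarrow> V c \<in> X\<^sub>F" "lin_on \<Theta>\<^sub>F V" "\<exists>K. \<forall>c\<in>\<Theta>\<^sub>F. N s (V c) \<le> K * T s c"
  "\<And>x. x \<in> X\<^sub>F \<Longrightarrow> V (\<lambda>i. g i x) = x"
  using synthesis unfolding F_synthesis_def lin_on_def by blast+

lemma analysis_extension:
  "\<exists>U. bdd_lin_map (X s) (N s) (\<Theta> s) (T s) U \<and> (\<forall>x\<in>X\<^sub>F. U x = (\<lambda>i. g i x))"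
proof -
  obtain A B where AB: "0 < A" "A \<le> B"
    "\<forall>x\<in>X\<^sub>F. A * N s x \<le> T s (\<lambda>i. g i x) \<and> T s (\<lambda>i. g i x) \<le> B * N s x"
    using pre_frame unfolding pre_F_frame_def by blast
  have B: "0 < B" and upper: "\<forall>x\<in>X\<^sub>F. T s (\<lambda>i. g i x) \<le> B * N s x" using AB by auto
  have "\<forall>x\<in>X\<^sub>F. (\<lambda>i. g i x) \<in> \<Theta> s" using coeffs_mem by blast
  from dense_extension[of "X s" "N s" "\<Theta> s" "T s" X\<^sub>F "\<lambda>x i. g i x" B,
      OF X_level(2) \<Theta>_level(1) X_level(3,4,5) analysis_lin this upper] B
  obtain U where "lin_on (X s) U" "\<forall>x\<in>X s. U x \<in> \<Theta> s" "\<forall>x\<in>X s. T s (U x) \<le> B * N s x"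
    "\<forall>x\<in>X\<^sub>F. U x = (\<lambda>i. g i x)"
    by auto
  with B show ?thesis unfolding bdd_lin_map_def by blast
qed

lemma synthesis_extension:
  "\<exists>W. bdd_lin_map (\<Theta> s) (T s) (X s) (N s) W \<and> (\<forall>c\<in>\<Theta>\<^sub>F. W c = V c)"
proof -
  obtain K where K: "\<forall>c\<in>\<Theta>\<^sub>F. N s (V c) \<le> K * T s c" using synthesis_facts(3) by blast
  have "K * T s c \<le> max K 1 * T s c" if "c \<in> \<Theta>\<^sub>F" for c
    using norm_onD(4)[OF \<Theta>_level(2)[of s]] that by (intro mult_right_mono) auto
  with K have bound: "\<forall>c\<in>\<Theta>\<^sub>F. N s (V c) \<le> max K 1 * T s c" by force
  have maps: "\<forall>c\<in>\<Theta>\<^sub>F. V c \<in> X s" using synthesis_facts(1) by blast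
  have "0 \<le> max K 1" by simp
  from dense_extension[of "\<Theta> s" "T s" "X s" "N s" \<Theta>\<^sub>F V "max K 1",
      OF \<Theta>_level(2) X_level(1) \<Theta>_level(3,4,5) synthesis_facts(2) maps bound this]
  obtain W where "lin_on (\<Theta> s) W" "\<forall>c\<in>\<Theta> s. W c \<in> X s"
      "\<forall>c\<in>\<Theta> s. N s (W c) \<le> max K 1 * T s c" "\<forall>c\<in>\<Theta>\<^sub>F. W c = V c"
    by auto
  moreover have "0 < max K 1" by simp
  ultimately show ?thesis unfolding bdd_lin_map_def by blast
qed

definition ana :: "nat \<Rightarrow> 'a \<Rightarrow> nat \<Rightarrow> real" where
  "ana s = (SOME U. bdd_lin_map (X s) (N s) (\<Theta> s) (T s) U \<and> (\<forall>x\<in>X\<^sub>F. U x = (\<lambda>i. g i x)))"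

definition syn :: "nat \<Rightarrow> (nat \<Rightarrow> real) \<Rightarrow> 'a" where
  "syn s = (SOME W. bdd_lin_map (\<Theta> s) (T s) (X s) (N s) W \<and> (\<forall>c\<in>\<Theta>\<^sub>F. W c = V c))"

lemma ana: "bdd_lin_map (X s) (N s) (\<Theta> s) (T s) (ana s)" "x \<in> X\<^sub>F \<Longrightarrow> ana s x = (\<lambda>i. g i x)"
  using someI_ex[OF analysis_extension[of s]] unfolding ana_def by blast+

lemma syn: "bdd_lin_map (\<Theta> s) (T s) (X s) (N s) (syn s)" "c \<in> \<Theta>\<^sub>F \<Longrightarrow> syn s c = V c"
  using someI_ex[OF synthesis_extension[of s]] unfolding syn_def by blast+

lemma ana_facts: "lin_on (X s) (ana s)" "x \<in> X s \<Longrightarrow> ana s x \<in> \<Theta> s"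
  and syn_facts: "lin_on (\<Theta> s) (syn s)" "c \<in> \<Theta> s \<Longrightarrow> syn s c \<in> X s"
  using ana(1) syn(1) unfolding bdd_lin_map_def by blast+

lemma ana_bound:
  obtains B where "B > 0" "\<And>x. x \<in> X s \<Longrightarrow> T s (ana s x) \<le> B * N s x"
  using ana(1)[of s] unfolding bdd_lin_map_def by blast

lemma syn_bound:
  obtains K where "K > 0" "\<And>c. c \<in> \<Theta> s \<Longrightarrow> N s (syn s c) \<le> K * T s c"
  using syn(1)[of s] unfolding bdd_lin_map_def by blast

text \<open>Reconstruction survives the extension: \<open>syn s \<circ> ana s\<close> is the identity of \<open>X\<^sub>s\<close>, by density.\<close>
lemma syn_ana:
  assumes x: "x \<in> X s"
  shows "syn s (ana s x) = x"
proof (rule bdd_lin_map_dense_unique[OF X_level(2) X_level(2) X_level(3) _ _ _ x])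
  show "bdd_lin_map (X s) (N s) (X s) (N s) (\<lambda>x. syn s (ana s x))"
    by (rule bdd_lin_map_comp[OF X_level(2) ana(1) syn(1)])
  show "bdd_lin_map (X s) (N s) (X s) (N s) (\<lambda>x. x)"
    unfolding bdd_lin_map_def lin_on_def by (auto intro!: exI[of _ 1])
  show "\<forall>d\<in>X\<^sub>F. syn s (ana s d) = d" using ana(2) syn(2) coeffs_mem synthesis_facts(4) by simp
qed

lemma F_ext_coord:
  "F_ext X N g s i \<in> dual_set (X s) (N s)" "x \<in> X s \<Longrightarrow> F_ext X N g s i x = ana s x i"
proof -
  obtain B where B: "B > 0" "\<And>x. x \<in> X s \<Longrightarrow> T s (ana s x) \<le> B * N s x" using ana_bound[of s] by blast
  have coord: "(\<lambda>x. ana s x i) \<in> dual_set (X s) (N s)"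
    using dual_set_pullback(1)[OF X_level(2) \<Theta>_level(2) coord_dual[OF BK_level] ana_facts(1) _ _
        less_imp_le[OF B(1)]] ana_facts(2) B(2) by blast
  let ?P = "\<lambda>h. h \<in> dual_set (X s) (N s) \<and> (\<forall>x\<in>X\<^sub>F. h x = g i x)"
  have "?P (F_ext X N g s i)"
    unfolding F_ext_def by (rule someI[of ?P "\<lambda>x. ana s x i"]) (use coord ana(2) in simp)
  then show "F_ext X N g s i \<in> dual_set (X s) (N s)" "x \<in> X s \<Longrightarrow> F_ext X N g s i x = ana s x i"
    using dual_set_dense_unique[OF X_level(2,3) _ coord] ana(2) by auto
qed

lemma F_ext_coeffs: "x \<in> X s \<Longrightarrow> (\<lambda>i. F_ext X N g s i x) = ana s x"
  using F_ext_coord(2) by (simp add: fun_eq_iff)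

lemma level_banach_frame: "banach_frame (X s) (N s) (\<Theta> s) (T s) (F_ext X N g s)"
proof -
  obtain B where B: "B > 0" "\<And>x. x \<in> X s \<Longrightarrow> T s (ana s x) \<le> B * N s x" using ana_bound[of s] by blast
  obtain K where K: "K > 0" "\<And>c. c \<in> \<Theta> s \<Longrightarrow> N s (syn s c) \<le> K * T s c" using syn_bound[of s] by blast
  have lower: "1 / K * N s x \<le> T s (ana s x)" if x: "x \<in> X s" for x
    using K(2)[OF ana_facts(2)[OF x]] syn_ana[OF x] K(1) by (simp add: divide_le_eq mult.commute)
  show ?thesis
    unfolding banach_frame_def theta_frame_def bounded_op_def
    using F_ext_coord(1) F_ext_coeffs ana_facts(2) lower B(2) K syn_facts syn_ana lin_onD[OF syn_facts(1)]
    by (intro conjI exI[of _ "1 / K"] exI[of _ B] exI[of _ "syn s"] exI[of _ K]) auto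
qed

section \<open>The dual sequence \<open>f\<^sub>i = V e\<^sub>i\<close>\<close>

definition fvec :: "nat \<Rightarrow> 'a" where "fvec i = V (e_vec i)"

lemma fvec_mem: "fvec i \<in> X\<^sub>F"
  unfolding fvec_def using synthesis_facts(1) e_vec_mem by blast

lemma syn_e_vec: "syn s (e_vec i) = fvec i"
  unfolding fvec_def using syn(2) e_vec_mem by blast

text \<open>In a \<open>CB\<close>-space \<open>c = \<Sum> c\<^sub>i e\<^sub>i\<close>, hence \<open>syn s c = \<Sum> c\<^sub>i f\<^sub>i\<close> in \<open>X\<^sub>s\<close>.\<close>
lemma syn_series:
  assumes CB: "CB_space (\<Theta> s) (T s)" and c: "c \<in> \<Theta> s"
  shows "(\<lambda>n. N s (syn s c - (\<Sum>i<n. c i *\<^sub>R fvec i))) \<longlonglongrightarrow> 0"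
proof -
  obtain K where K: "K > 0" "\<And>c. c \<in> \<Theta> s \<Longrightarrow> N s (syn s c) \<le> K * T s c" using syn_bound[of s] by blast
  let ?P = "\<lambda>n. (\<Sum>i<n. c i *\<^sub>R e_vec i)"
  have P: "?P n \<in> \<Theta> s" for n using section_mem[OF \<Theta>_level(2) e_vec_mem] .
  have eq: "syn s c - (\<Sum>i<n. c i *\<^sub>R fvec i) = syn s (c - ?P n)" for n
    using lin_on_lincomb[OF syn_facts(1) \<Theta>_level(2), where n=n and v=e_vec and c=c] lin_on_diff[OF syn_facts(1) \<Theta>_level(2) c P]
      e_vec_mem syn_e_vec by simp
  show ?thesis
  proof (rule Lim_null_comparison[OF always_eventually], intro allI)
    show "norm (N s (syn s c - (\<Sum>i<n. c i *\<^sub>R fvec i))) \<le> K * T s (c - ?P n)" for n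
      unfolding eq using K(2)[OF norm_on_diff[OF \<Theta>_level(2) c P]]
        norm_onD(4)[OF X_level(2) syn_facts(2)[OF norm_on_diff[OF \<Theta>_level(2) c P]]] by simp
    show "(\<lambda>n. K * T s (c - ?P n)) \<longlonglongrightarrow> 0"
      using tendsto_mult_left[OF CB_sections[OF CB c], of K] by simp
  qed
qed

lemma level_expansion:
  assumes "CB_space (\<Theta> s) (T s)" "x \<in> X s"
  shows "(\<lambda>n. N s (x - (\<Sum>i<n. F_ext X N g s i x *\<^sub>R fvec i))) \<longlonglongrightarrow> 0"
  using syn_series[OF assms(1) ana_facts(2)[OF assms(2)]] syn_ana[OF assms(2)] F_ext_coord(2)[OF assms(2)]
  by simp

lemma expansion_XF: "\<forall>s. CB_space (\<Theta> s) (T s) \<Longrightarrow> exp_XF X N g fvec"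
  unfolding exp_XF_def using level_expansion F_ext_coord(2) ana(2) by fastforce

lemma expansion_Xs: "\<forall>s. CB_space (\<Theta> s) (T s) \<Longrightarrow> exp_Xs X N g fvec"
  unfolding exp_Xs_def using level_expansion by blast

text \<open>Weak-* expansion of functionals on \<open>X\<^sub>F\<close>, obtained by applying them to the expansion in \<open>X\<^sub>F\<close>.\<close>
lemma expansion_XF_dual:
  assumes CB: "\<forall>s. CB_space (\<Theta> s) (T s)"
  shows "exp_XF_dual X N g fvec"
  unfolding exp_XF_dual_def
proof (intro ballI)
  fix h x assume h: "h \<in> frechet_dual X N" and x: "x \<in> X\<^sub>F"
  obtain s K where K: "\<forall>y\<in>X\<^sub>F. \<bar>h y\<bar> \<le> K * N s y" using h unfolding frechet_dual_def by blast
  have h_lin: "lin_on X\<^sub>F h" using h unfolding frechet_dual_def lin_on_def by simp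
  let ?S = "\<lambda>n. (\<Sum>i<n. g i x *\<^sub>R fvec i)"
  have XF: "is_norm_on X\<^sub>F (N s)" by (rule X_level(6))
  have S: "?S n \<in> X\<^sub>F" for n by (rule norm_on_lincomb[OF XF fvec_mem])
  have error: "\<bar>(\<Sum>i<n. h (fvec i) * g i x) - h x\<bar> \<le> \<bar>K\<bar> * N s (x - ?S n)" for n
  proof -
    have xS: "x - ?S n \<in> X\<^sub>F" using norm_on_diff[OF XF x S] .
    have "(\<Sum>i<n. h (fvec i) * g i x) - h x = - h (x - ?S n)"
      using lin_on_lincomb[OF h_lin XF, where n=n and v=fvec] lin_on_diff[OF h_lin XF x S] fvec_mem
      by (simp add: mult.commute)
    then have "\<bar>(\<Sum>i<n. h (fvec i) * g i x) - h x\<bar> = \<bar>h (x - ?S n)\<bar>" by simp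
    also have "\<dots> \<le> K * N s (x - ?S n)" using K xS by simp
    also have "\<dots> \<le> \<bar>K\<bar> * N s (x - ?S n)" using norm_onD(4)[OF XF xS] by (intro mult_right_mono) auto
    finally show ?thesis .
  qed
  have "(\<lambda>n. \<bar>K\<bar> * N s (x - ?S n)) \<longlonglongrightarrow> 0"
    using tendsto_mult_left[OF expansion_XF[OF CB, unfolded exp_XF_def, rule_format, OF x, of s], of "\<bar>K\<bar>"]
    by simp
  then have "(\<lambda>n. (\<Sum>i<n. h (fvec i) * g i x) - h x) \<longlonglongrightarrow> 0"
    by (rule Lim_null_comparison[OF always_eventually, rotated]) (simp add: error)
  then show "(\<lambda>n. \<Sum>i<n. h (fvec i) * g i x) \<longlonglongrightarrow> h x" by (simp add: LIM_zero_iff)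
qed

text \<open>
  A functional \<open>h \<in> X\<^sub>s\<^sup>*\<close> corresponds to \<open>h \<circ> syn s \<in> \<Theta>\<^sub>s\<^sup>*\<close>, whose coefficient sequence is
  \<open>(h f\<^sub>i)\<close>; the two norms are equivalent.
\<close>
lemma pullback:
  assumes h: "h \<in> dual_set (X s) (N s)"
  shows "(\<lambda>c. h (syn s c)) \<in> dual_set (\<Theta> s) (T s)" "(\<lambda>i. h (fvec i)) \<in> seq_dual (\<Theta> s) (T s)"
    "CB_space (\<Theta> s) (T s) \<Longrightarrow> seq_dual_norm (\<Theta> s) (T s) (\<lambda>i. h (fvec i)) = fnorm (\<Theta> s) (T s) (\<lambda>c. h (syn s c))"
proof -
  obtain K where K: "K > 0" "\<And>c. c \<in> \<Theta> s \<Longrightarrow> N s (syn s c) \<le> K * T s c" using syn_bound[of s] by blast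
  show H: "(\<lambda>c. h (syn s c)) \<in> dual_set (\<Theta> s) (T s)"
    using dual_set_pullback(1)[OF \<Theta>_level(2) X_level(2) h syn_facts(1) _ _ less_imp_le[OF K(1)]]
      syn_facts(2) K(2) by blast
  then show "(\<lambda>i. h (fvec i)) \<in> seq_dual (\<Theta> s) (T s)"
    unfolding seq_dual_def using syn_e_vec by (intro CollectI bexI[of _ "\<lambda>c. h (syn s c)"]) auto
  show "CB_space (\<Theta> s) (T s) \<Longrightarrow> seq_dual_norm (\<Theta> s) (T s) (\<lambda>i. h (fvec i)) = fnorm (\<Theta> s) (T s) (\<lambda>c. h (syn s c))"
    using CB_seq_dual_norm[OF _ H] syn_e_vec by simp
qed

lemma pullback_norms:
  obtains A K where "A > 0" "\<And>h. h \<in> dual_set (X s) (N s) \<Longrightarrow>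
      A * fnorm (X s) (N s) h \<le> fnorm (\<Theta> s) (T s) (\<lambda>c. h (syn s c))
      \<and> fnorm (\<Theta> s) (T s) (\<lambda>c. h (syn s c)) \<le> K * fnorm (X s) (N s) h"
proof -
  obtain B where B: "B > 0" "\<And>x. x \<in> X s \<Longrightarrow> T s (ana s x) \<le> B * N s x" using ana_bound[of s] by blast
  obtain K where K: "K > 0" "\<And>c. c \<in> \<Theta> s \<Longrightarrow> N s (syn s c) \<le> K * T s c" using syn_bound[of s] by blast
  have "1 / B * fnorm (X s) (N s) h \<le> fnorm (\<Theta> s) (T s) (\<lambda>c. h (syn s c))
      \<and> fnorm (\<Theta> s) (T s) (\<lambda>c. h (syn s c)) \<le> K * fnorm (X s) (N s) h"
    if h: "h \<in> dual_set (X s) (N s)" for h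
  proof
    let ?H = "\<lambda>c. h (syn s c)"
    have H: "?H \<in> dual_set (\<Theta> s) (T s)" using pullback(1)[OF h] .
    show "fnorm (\<Theta> s) (T s) ?H \<le> K * fnorm (X s) (N s) h"
      using dual_set_pullback(2)[OF \<Theta>_level(2) X_level(2) h syn_facts(1) _ _ less_imp_le[OF K(1)]]
        syn_facts(2) K(2) by (simp add: mult.commute)
    have "\<bar>h x\<bar> \<le> (fnorm (\<Theta> s) (T s) ?H * B) * N s x" if x: "x \<in> X s" for x
    proof -
      have "\<bar>h x\<bar> = \<bar>?H (ana s x)\<bar>" using syn_ana[OF x] by simp
      also have "\<dots> \<le> fnorm (\<Theta> s) (T s) ?H * T s (ana s x)"
        using dual_fnorm_bound[OF \<Theta>_level(2) H ana_facts(2)[OF x]] .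
      also have "\<dots> \<le> fnorm (\<Theta> s) (T s) ?H * (B * N s x)"
        using B(2)[OF x] dual_fnorm_nonneg[OF \<Theta>_level(2) H] by (rule mult_left_mono)
      finally show ?thesis by (simp add: mult.assoc)
    qed
    then have "fnorm (X s) (N s) h \<le> fnorm (\<Theta> s) (T s) ?H * B"
      using dual_fnorm_nonneg[OF \<Theta>_level(2) H] B(1) by (intro fnorm_le) auto
    then show "1 / B * fnorm (X s) (N s) h \<le> fnorm (\<Theta> s) (T s) ?H"
      using B(1) by (simp add: divide_le_eq mult.commute)
  qed
  with B(1) show ?thesis by (intro that[of "1 / B" K]) auto
qed

lemma level_dual_frame:
  assumes CB: "CB_space (\<Theta> s) (T s)"
  shows "dual_frame (X s) (N s) (seq_dual (\<Theta> s) (T s)) (seq_dual_norm (\<Theta> s) (T s)) fvec"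
proof -
  obtain A K where "A > 0" "\<And>h. h \<in> dual_set (X s) (N s) \<Longrightarrow>
      A * fnorm (X s) (N s) h \<le> fnorm (\<Theta> s) (T s) (\<lambda>c. h (syn s c))
      \<and> fnorm (\<Theta> s) (T s) (\<lambda>c. h (syn s c)) \<le> K * fnorm (X s) (N s) h"
    using pullback_norms[of s] by blast
  then show ?thesis unfolding dual_frame_def
    using fvec_mem pullback(2) pullback(3)[OF _ CB] by (intro conjI exI[of _ A] exI[of _ K]) auto
qed

text \<open>
  A coefficient sequence \<open>c \<in> \<Theta>\<^sub>s\<^sup>*\<close> is
  represented by a functional \<open>S\<^sub>c\<close> on \<open>\<Theta>\<^sub>s\<close>, and \<open>c \<mapsto> S\<^sub>c \<circ> ana s\<close> reconstructs \<open>h\<close> from \<open>(h f\<^sub>i)\<close>.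
\<close>
lemma level_dual_banach_frame:
  assumes CB: "CB_space (\<Theta> s) (T s)"
  shows "dual_banach_frame (X s) (N s) (seq_dual (\<Theta> s) (T s)) (seq_dual_norm (\<Theta> s) (T s)) fvec"
proof -
  obtain B where B: "B > 0" "\<And>x. x \<in> X s \<Longrightarrow> T s (ana s x) \<le> B * N s x" using ana_bound[of s] by blast
  let ?S = "\<lambda>c. SOME G'. G' \<in> dual_set (\<Theta> s) (T s) \<and> (\<forall>i. c i = G' (e_vec i))"
  let ?W = "\<lambda>c x. ?S c (ana s x)"
  have repr: "?S c \<in> dual_set (\<Theta> s) (T s) \<and> (\<forall>z\<in>\<Theta> s. ?S c z = G z)"
    if "G \<in> dual_set (\<Theta> s) (T s)" "\<forall>i. c i = G (e_vec i)" for c G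
    using CB_seq_dual_repr[OF CB that] by blast
  have S_dual: "?S c \<in> dual_set (\<Theta> s) (T s)" if "c \<in> seq_dual (\<Theta> s) (T s)" for c
    using that repr unfolding seq_dual_def by blast
  have W_dual: "?W c \<in> dual_set (X s) (N s)"
    and W_norm: "fnorm (X s) (N s) (?W c) \<le> fnorm (\<Theta> s) (T s) (?S c) * B"
    if "c \<in> seq_dual (\<Theta> s) (T s)" for c
    using dual_set_pullback[OF X_level(2) \<Theta>_level(2) S_dual[OF that] ana_facts(1) _ _ less_imp_le[OF B(1)]]
      ana_facts(2) B(2) by blast+
  show ?thesis unfolding dual_banach_frame_def
  proof (intro conjI exI[of _ ?W] ballI allI)
    show "dual_frame (X s) (N s) (seq_dual (\<Theta> s) (T s)) (seq_dual_norm (\<Theta> s) (T s)) fvec"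
      using level_dual_frame[OF CB] .
    show "?W c \<in> dual_set (X s) (N s)" if "c \<in> seq_dual (\<Theta> s) (T s)" for c using W_dual[OF that] .
    show "?W (c + d) x = ?W c x + ?W d x"
      if c: "c \<in> seq_dual (\<Theta> s) (T s)" and d: "d \<in> seq_dual (\<Theta> s) (T s)" and x: "x \<in> X s" for c d x
    proof -
      obtain Gc where Gc: "Gc \<in> dual_set (\<Theta> s) (T s)" "\<forall>i. c i = Gc (e_vec i)" using c unfolding seq_dual_def by blast
      obtain Gd where Gd: "Gd \<in> dual_set (\<Theta> s) (T s)" "\<forall>i. d i = Gd (e_vec i)" using d unfolding seq_dual_def by blast
      have "\<forall>i. (c + d) i = (\<lambda>z. Gc z + Gd z) (e_vec i)" using Gc(2) Gd(2) by simp
      from repr[OF dual_set_add[OF \<Theta>_level(2) Gc(1) Gd(1)] this] repr[OF Gc] repr[OF Gd] ana_facts(2)[OF x]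
      show ?thesis by simp
    qed
    show "?W (a *\<^sub>R c) x = a * ?W c x" if c: "c \<in> seq_dual (\<Theta> s) (T s)" and x: "x \<in> X s" for a c x
    proof -
      obtain Gc where Gc: "Gc \<in> dual_set (\<Theta> s) (T s)" "\<forall>i. c i = Gc (e_vec i)" using c unfolding seq_dual_def by blast
      have "\<forall>i. (a *\<^sub>R c) i = (\<lambda>z. a * Gc z) (e_vec i)" using Gc(2) by (simp add: scaleR_fun_apply)
      from repr[OF dual_set_scale[OF \<Theta>_level(2) Gc(1)] this] repr[OF Gc] ana_facts(2)[OF x]
      show ?thesis by simp
    qed
    show "\<exists>K. \<forall>c\<in>seq_dual (\<Theta> s) (T s). fnorm (X s) (N s) (?W c) \<le> K * seq_dual_norm (\<Theta> s) (T s) c"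
      using W_norm unfolding seq_dual_norm_def by (intro exI[of _ B]) (simp add: mult.commute)
    show "?W (\<lambda>i. h (fvec i)) x = h x" if h: "h \<in> dual_set (X s) (N s)" and x: "x \<in> X s" for h x
      using repr[OF pullback(1)[OF h], of "\<lambda>i. h (fvec i)"] syn_e_vec ana_facts(2)[OF x] syn_ana[OF x] by simp
  qed
qed

text \<open>
  Expansion of functionals in \<open>X\<^sub>s\<^sup>*\<close>: the error \<open>h - \<Sum>\<^sub>i\<^sub><\<^sub>n h(f\<^sub>i) g\<^sub>i\<^sup>s\<close> is the tail functional of
  \<open>h \<circ> syn s\<close> composed with \<open>ana s\<close>, which tends to \<open>0\<close> when the basis of \<open>\<Theta>\<^sub>s\<close> is shrinking.
\<close>
lemma expansion_Xs_dual:
  assumes shrink: "\<forall>s. shrinking_on (\<Theta> s) (T s)"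
  shows "exp_Xs_dual X N g fvec"
  unfolding exp_Xs_dual_def
proof (intro allI ballI)
  fix s h assume h: "h \<in> dual_set (X s) (N s)"
  obtain B where B: "B > 0" "\<And>x. x \<in> X s \<Longrightarrow> T s (ana s x) \<le> B * N s x" using ana_bound[of s] by blast
  obtain l where l: "lambda_BK (\<Theta> s) (T s) l" using lambda_BK by blast
  let ?H = "\<lambda>c. h (syn s c)"
  let ?D = "\<lambda>n c. ?H c - (\<Sum>i<n. ?H (e_vec i) * c i)"
  have D: "?D n \<in> dual_set (\<Theta> s) (T s)" for n using tail_functional_dual[OF l pullback(1)[OF h]] .
  have D_nonneg: "0 \<le> fnorm (\<Theta> s) (T s) (?D n)" for n using dual_fnorm_nonneg[OF \<Theta>_level(2) D] .
  have bound: "\<forall>x\<in>X s. \<bar>h x - (\<Sum>i<n. h (fvec i) * F_ext X N g s i x)\<bar> \<le> (fnorm (\<Theta> s) (T s) (?D n) * B) * N s x" for n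
  proof
    fix x assume x: "x \<in> X s"
    have "\<bar>h x - (\<Sum>i<n. h (fvec i) * F_ext X N g s i x)\<bar> = \<bar>?D n (ana s x)\<bar>"
      using syn_ana[OF x] F_ext_coord(2)[OF x] syn_e_vec by simp
    also have "\<dots> \<le> fnorm (\<Theta> s) (T s) (?D n) * T s (ana s x)"
      by (rule dual_fnorm_bound[OF \<Theta>_level(2) D[of n] ana_facts(2)[OF x]])
    also have "\<dots> \<le> fnorm (\<Theta> s) (T s) (?D n) * (B * N s x)" using B(2)[OF x] D_nonneg[of n] by (rule mult_left_mono)
    finally show "\<bar>h x - (\<Sum>i<n. h (fvec i) * F_ext X N g s i x)\<bar> \<le> (fnorm (\<Theta> s) (T s) (?D n) * B) * N s x"
      by (simp add: mult.assoc)
  qed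
  have "(\<lambda>n. fnorm (\<Theta> s) (T s) (?D n)) \<longlonglongrightarrow> 0"
    using shrink[unfolded shrinking_on_def, rule_format, OF pullback(1)[OF h]] by simp
  from tendsto_mult_right[OF this, of B] have lim: "(\<lambda>n. fnorm (\<Theta> s) (T s) (?D n) * B) \<longlonglongrightarrow> 0"
    by simp
  have error: "\<bar>fnorm (X s) (N s) (\<lambda>x. h x - (\<Sum>i<n. h (fvec i) * F_ext X N g s i x))\<bar>
      \<le> fnorm (\<Theta> s) (T s) (?D n) * B" for n
  proof -
    have "0 \<le> fnorm (\<Theta> s) (T s) (?D n) * B" using D_nonneg[of n] B(1) by simp
    from fnorm_nonneg[OF this bound[of n]] fnorm_le[OF this bound[of n]] show ?thesis by simp
  qed
  show "(\<lambda>n. fnorm (X s) (N s) (\<lambda>x. h x - (\<Sum>i<n. h (fvec i) * F_ext X N g s i x))) \<longlonglongrightarrow> 0"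
    by (rule Lim_null_comparison[OF always_eventually lim]) (simp add: error)
qed

lemma part_b:
  assumes CB: "\<forall>s. CB_space (\<Theta> s) (T s)"
  shows "\<exists>f. (\<forall>i. f i \<in> X\<^sub>F) \<and> DF_bessel X N \<Theta> T f
           \<and> exp_XF X N g f \<and> exp_XF_dual X N g f \<and> exp_Xs X N g f"
  using fvec_mem level_dual_frame[THEN dual_frame_bessel] CB
    expansion_XF[OF CB] expansion_XF_dual[OF CB] expansion_Xs[OF CB]
  unfolding DF_bessel_def by blast

lemma part_c:
  assumes CB: "\<forall>s. CB_space (\<Theta> s) (T s) \<and> CB_space (seq_dual (\<Theta> s) (T s)) (seq_dual_norm (\<Theta> s) (T s))"
  shows "\<exists>f. (\<forall>i. f i \<in> X\<^sub>F) \<and> pre_DF_frame X N \<Theta> T f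
           \<and> exp_XF X N g f \<and> exp_XF_dual X N g f \<and> exp_Xs X N g f \<and> exp_Xs_dual X N g f"
proof -
  have CB_levels: "\<forall>s. CB_space (\<Theta> s) (T s)" using CB by blast
  have "\<forall>s. shrinking_on (\<Theta> s) (T s)" using CB_dual_shrinking CB lambda_BK by blast
  then show ?thesis
    using fvec_mem level_dual_frame CB_levels expansion_Xs_dual expansion_XF[OF CB_levels]
      expansion_XF_dual[OF CB_levels] expansion_Xs[OF CB_levels]
    unfolding pre_DF_frame_def by blast
qed

lemma part_d:
  assumes CB: "\<forall>s. CB_space (\<Theta> s) (T s) \<and> reflexive_on (\<Theta> s) (T s)"
  shows "\<exists>f. (\<forall>i. f i \<in> X\<^sub>F) \<and> DF_frame X N \<Theta> T f
           \<and> exp_XF X N g f \<and> exp_XF_dual X N g f \<and> exp_Xs X N g f \<and> exp_Xs_dual X N g f"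
proof -
  have CB_levels: "\<forall>s. CB_space (\<Theta> s) (T s)" using CB by blast
  have "\<forall>s. shrinking_on (\<Theta> s) (T s)" using reflexive_shrinking CB lambda_BK by blast
  then show ?thesis
    using fvec_mem level_dual_banach_frame CB_levels expansion_Xs_dual expansion_XF[OF CB_levels]
      expansion_XF_dual[OF CB_levels] expansion_Xs[OF CB_levels]
    unfolding DF_frame_def by blast
qed

end

theorem theorem3p4:
  fixes X :: "nat \<Rightarrow> 'a::real_vector set" and N :: "nat \<Rightarrow> 'a \<Rightarrow> real"
    and \<Theta> :: "nat \<Rightarrow> (nat \<Rightarrow> real) set" and T :: "nat \<Rightarrow> (nat \<Rightarrow> real) \<Rightarrow> real"
    and g :: "nat \<Rightarrow> 'a \<Rightarrow> real"
  assumes "F_seq X N"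
    and "F_seq \<Theta> T"
    and "\<forall>s. \<exists>l. lambda_BK (\<Theta> s) (T s) l"
    and "F_frame X N \<Theta> T g"
  shows "(\<forall>s. banach_frame (X s) (N s) (\<Theta> s) (T s) (F_ext X N g s))
    \<and> ((\<forall>s. CB_space (\<Theta> s) (T s)) \<longrightarrow>
        (\<exists>f. (\<forall>i. f i \<in> (\<Inter>r. X r)) \<and> DF_bessel X N \<Theta> T f
             \<and> exp_XF X N g f \<and> exp_XF_dual X N g f \<and> exp_Xs X N g f))
    \<and> ((\<forall>s. CB_space (\<Theta> s) (T s) \<and> CB_space (seq_dual (\<Theta> s) (T s)) (seq_dual_norm (\<Theta> s) (T s))) \<longrightarrow>
        (\<exists>f. (\<forall>i. f i \<in> (\<Inter>r. X r)) \<and> pre_DF_frame X N \<Theta> T f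
             \<and> exp_XF X N g f \<and> exp_XF_dual X N g f \<and> exp_Xs X N g f \<and> exp_Xs_dual X N g f))
    \<and> ((\<forall>s. CB_space (\<Theta> s) (T s) \<and> reflexive_on (\<Theta> s) (T s)) \<longrightarrow>
        (\<exists>f. (\<forall>i. f i \<in> (\<Inter>r. X r)) \<and> DF_frame X N \<Theta> T f
             \<and> exp_XF X N g f \<and> exp_XF_dual X N g f \<and> exp_Xs X N g f \<and> exp_Xs_dual X N g f))"
proof -
  obtain V where "pre_F_frame X N \<Theta> T g" "F_synthesis X N \<Theta> T g V"
    using assms(4) unfolding F_frame_iff by blast
  then interpret F_frame_setting X N \<Theta> T g V
    using assms(1-3) by unfold_locales
  show ?thesis
    using level_banach_frame part_b part_c part_d by blast
qed

end
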